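(* Let $\alpha\in(0,1)$ and let $\{x_i\}_{i=1}^{\infty}$ be any countable subset of $SU(2)$. Then there exists a real-valued function $f\in\mathrm{Lip}_{\alpha}(SU(2))$ such that \[ \sup_{N\geq 1}|S_N f(x_i)|=\infty \quad\text{for all } i=1,2,3,\ldots. \]
   Context: $SU(2)$ is the group of $2\times 2$ complex unitary matrices of determinant $1$, equipped with the metric $d(x,y)=\sqrt{\tfrac12\mathrm{tr}((x-y)(x-y)^* )}$. For $0<\alpha<1$, $\mathrm{Lip}_{\alpha}(SU(2))$ is the set of real functions $f$ on $SU(2)$ for which there is $M\ge 0$ with $|f(x)-f(y)|\le M d(x,y)^{\alpha}$ for all $x,y\in SU(2)$. Let $\mu$ be normalized Haar measure on $SU(2)$. For each $x\in SU(2)$ with eigenvalues $e^{\pm i\theta}$, $\theta\in[0,\pi]$, the character of the $(n+1)$-dimensional irreducible unitary representation is $\chi_n(x)=\frac{\sin((n+1)\theta)}{\sin\theta}$ (interpreted by continuity at $\theta=0,\pi$). The Dirichlet kernel is $\mathbf{D}_N(x)=\sum_{n=0}^N (n+1)\chi_n(x)$, and for $f\in L^1(SU(2))$ the $N$th Fourier partial sum is $S_Nf(x)=(f*\mathbf{D}_N)(x)=\int_{SU(2)} f(xy^{-1})\mathbf{D}_N(y)\,d\mu(y)$. *)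

theory Defs
  imports "HOL-Analysis.Analysis"
begin

type_synonym cmat2 = "complex ^ 2 ^ 2"

definition conj_transpose :: "cmat2 \<Rightarrow> cmat2" where
  "conj_transpose A = (\<chi> i j. cnj (A $ j $ i))"

definition SU2 :: "cmat2 set" where
  "SU2 = {U. U ** conj_transpose U = mat 1 \<and> det U = 1}"

text \<open>d(x,y) = sqrt(1/2 tr((x-y)(x-y)^*)); the trace is real and nonnegative, we take its real part.\<close>
definition su2_dist :: "cmat2 \<Rightarrow> cmat2 \<Rightarrow> real" where
  "su2_dist x y = sqrt ((1/2) * Re (trace ((x - y) ** conj_transpose (x - y))))"

definition Lip_alpha :: "real \<Rightarrow> (cmat2 \<Rightarrow> real) \<Rightarrow> bool" where
  "Lip_alpha \<alpha> f \<longleftrightarrow> (\<exists>M\<ge>0. \<forall>x\<in>SU2. \<forall>y\<in>SU2. \<bar>f x - f y\<bar> \<le> M * su2_dist x y powr \<alpha>)"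

definition is_haar_SU2 :: "cmat2 measure \<Rightarrow> bool" where
  "is_haar_SU2 \<mu> \<longleftrightarrow> sets \<mu> = sets (restrict_space borel SU2) \<and> space \<mu> = SU2 \<and>
     emeasure \<mu> (space \<mu>) = 1 \<and>
     (\<forall>x\<in>SU2. \<forall>A\<in>sets \<mu>. emeasure \<mu> ((\<lambda>y. x ** y) ` A) = emeasure \<mu> A)"

text \<open>The angle theta in [0,pi] with eigenvalues exp(+-i theta); since the eigenvalues are
  exp(i theta), exp(-i theta), the trace is 2 cos theta.\<close>
definition su2_angle :: "cmat2 \<Rightarrow> real" where
  "su2_angle x = arccos (Re (trace x) / 2)"

definition su2_char :: "nat \<Rightarrow> cmat2 \<Rightarrow> real" where
  "su2_char n x = (let \<theta> = su2_angle x in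
     if \<theta> = 0 then real (n + 1)
     else if \<theta> = pi then (-1) ^ n * real (n + 1)
     else sin (real (n + 1) * \<theta>) / sin \<theta>)"

definition dirichlet_kernel :: "nat \<Rightarrow> cmat2 \<Rightarrow> real" where
  "dirichlet_kernel N x = (\<Sum>n\<le>N. real (n + 1) * su2_char n x)"

definition fourier_partial_sum :: "cmat2 measure \<Rightarrow> nat \<Rightarrow> (cmat2 \<Rightarrow> real) \<Rightarrow> cmat2 \<Rightarrow> real" where
  "fourier_partial_sum \<mu> N f x = (\<integral>y. f (x ** matrix_inv y) * dirichlet_kernel N y \<partial>\<mu>)"

end

(*
  A gliding-hump argument. Functions of the form p (Re x11), p a real polynomial, are functions
  of the trace; left invariance of Haar measure under the rotations acting on the four real
  coordinates of SU(2) determines the moments of Re x11, which gives the Weyl formula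
  Haar integral of p (Re x11) = (2 / pi) * integral over [0, pi] of p (cos t) (sin t)^2.
  Hence the characters are the Chebyshev polynomials U_n (Re x11), orthonormal for Haar measure,
  and the Dirichlet kernel D_N is a polynomial in Re x11 bounded by (N + 1)^3.

  For a centre x and a degree m, phi_m (cos t) = (sin t)^2 cos ((m + 4) t) is a combination of
  U_m, U_(m+2), U_(m+4), U_(m+6), so the bump z |-> phi_m (Re (x^* z)) / (2 (m + 6)^alpha) is
  alpha-Hoelder with constant 1 and bounded by 1/2, while its partial sum of order m + 3 at x is
  of size m^(1 - alpha). Enumerating the countable set with every point repeated infinitely often,
  we take f = sum of c_j eps_j times the j-th bump, with summable weights eps_j, degrees m_j growing
  so fast that the j-th bump gives |S_(m_j+3) f (x_j)| >= j + 1 up to the tail, and signs c_j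
  chosen so that the earlier bumps cannot cancel it.
*)

theory Submission
  imports Defs "HOL-Computational_Algebra.Polynomial"
begin

definition su2_mat :: "complex \<Rightarrow> complex \<Rightarrow> cmat2" where
  "su2_mat a b = (\<chi> i j. if i = 1 then (if j = 1 then a else b) else (if j = 1 then - cnj b else cnj a))"

lemma su2_mat_nth [simp]:
  "su2_mat a b $ 1 $ 1 = a" "su2_mat a b $ 1 $ 2 = b"
  "su2_mat a b $ 2 $ 1 = - cnj b" "su2_mat a b $ 2 $ 2 = cnj a"
  by (simp_all add: su2_mat_def)

lemma cmat2_eq_iff: "(A::cmat2) = B \<longleftrightarrow> A$1$1 = B$1$1 \<and> A$1$2 = B$1$2 \<and> A$2$1 = B$2$1 \<and> A$2$2 = B$2$2"
  by (auto simp: vec_eq_iff forall_2)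

lemma cmat2_mult_nth: "((A::cmat2) ** B) $ i $ j = A$i$1 * B$1$j + A$i$2 * B$2$j"
  by (simp add: matrix_matrix_mult_def sum_2)

lemma conj_transpose_nth [simp]: "conj_transpose A $ i $ j = cnj (A $ j $ i)"
  by (simp add: conj_transpose_def)

lemma su2_mat_mult: "su2_mat a b ** su2_mat c d = su2_mat (a*c - b * cnj d) (a*d + b * cnj c)"
  by (simp add: cmat2_eq_iff cmat2_mult_nth algebra_simps)

lemma conj_transpose_su2_mat: "conj_transpose (su2_mat a b) = su2_mat (cnj a) (- b)"
  by (simp add: cmat2_eq_iff)

lemma mat_1_eq_su2_mat: "(mat 1 :: cmat2) = su2_mat 1 0"
  by (simp add: cmat2_eq_iff mat_def)

lemma su2_mat_diff: "su2_mat p q - su2_mat r s = su2_mat (p - r) (q - s)"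
  by (simp add: cmat2_eq_iff)

lemma det_su2_mat: "det (su2_mat a b) = a * cnj a + b * cnj b"
  by (simp add: det_2 algebra_simps)

lemma norm_sum_squares_eq_1_iff:
  "(cmod a)\<^sup>2 + (cmod b)\<^sup>2 = 1 \<longleftrightarrow> a * cnj a + b * cnj b = 1"
proof -
  have "a * cnj a + b * cnj b = of_real ((cmod a)\<^sup>2 + (cmod b)\<^sup>2)"
    by (simp flip: complex_norm_square)
  then show ?thesis by (simp only: of_real_eq_1_iff)
qed

lemma su2_mat_in_SU2_iff: "su2_mat a b \<in> SU2 \<longleftrightarrow> (cmod a)\<^sup>2 + (cmod b)\<^sup>2 = 1"
proof -
  have "su2_mat a b ** conj_transpose (su2_mat a b) = su2_mat (a * cnj a + b * cnj b) 0"
    by (simp add: conj_transpose_su2_mat su2_mat_mult algebra_simps)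
  then have "su2_mat a b \<in> SU2 \<longleftrightarrow> a * cnj a + b * cnj b = 1"
    by (auto simp: SU2_def mat_1_eq_su2_mat det_su2_mat cmat2_eq_iff mult.commute)
  then show ?thesis by (simp add: norm_sum_squares_eq_1_iff)
qed

lemma SU2_eq_su2_mat:
  assumes "y \<in> SU2"
  shows "y = su2_mat (y$1$1) (y$1$2)"
proof -
  define a b c d where "a = y$1$1" "b = y$1$2" "c = y$2$1" "d = y$2$2"
  have "(y ** conj_transpose y) $ 1 $ 1 = 1" "(y ** conj_transpose y) $ 1 $ 2 = 0" "det y = 1"
    using assms by (auto simp: SU2_def mat_def)
  then have norm: "a * cnj a + b * cnj b = 1" and orth': "a * cnj c + b * cnj d = 0"
    and det: "a * d - b * c = 1"
    by (simp_all add: cmat2_mult_nth det_2 a_b_c_d_def)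
  have orth: "cnj a * c + cnj b * d = 0" using arg_cong[OF orth', of cnj] by simp
  \<comment> \<open>a unit first row, orthogonality of the rows and \<open>det y = 1\<close> force the second row\<close>
  have "d = (a * cnj a + b * cnj b) * d" using norm by simp
  also have "\<dots> = cnj a * (a * d - b * c) + b * (cnj a * c + cnj b * d)" by (simp add: algebra_simps)
  finally have "d = cnj a" using det orth by simp
  moreover have "c = (a * cnj a + b * cnj b) * c" using norm by simp
  then have "c = a * (cnj a * c + cnj b * d) - cnj b * (a * d - b * c)" by (simp add: algebra_simps)
  then have "c = - cnj b" using det orth by simp
  ultimately show ?thesis by (simp add: cmat2_eq_iff a_b_c_d_def)
qed

lemma SU2_cases:
  assumes "y \<in> SU2"
  obtains a b where "y = su2_mat a b" "(cmod a)\<^sup>2 + (cmod b)\<^sup>2 = 1"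
  using SU2_eq_su2_mat[OF assms] assms su2_mat_in_SU2_iff by metis

lemma su2_mat_in_SU2_iff_det: "su2_mat a b \<in> SU2 \<longleftrightarrow> det (su2_mat a b) = 1"
  by (simp add: su2_mat_in_SU2_iff det_su2_mat norm_sum_squares_eq_1_iff)

lemma SU2_mult_closed:
  assumes "x \<in> SU2" "y \<in> SU2"
  shows "x ** y \<in> SU2"
proof -
  have "det (x ** y) = 1" using assms by (simp add: det_mul SU2_def)
  then show ?thesis
    using assms by (auto elim!: SU2_cases simp: su2_mat_mult su2_mat_in_SU2_iff_det)
qed

lemma conj_transpose_in_SU2: "y \<in> SU2 \<Longrightarrow> conj_transpose y \<in> SU2"
  by (erule SU2_cases) (simp add: conj_transpose_su2_mat su2_mat_in_SU2_iff)

lemma SU2_conj_transpose_mult: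
  assumes "y \<in> SU2"
  shows "conj_transpose y ** y = mat 1" "y ** conj_transpose y = mat 1"
proof -
  obtain a b where y: "y = su2_mat a b" "(cmod a)\<^sup>2 + (cmod b)\<^sup>2 = 1" using assms by (rule SU2_cases)
  then have "a * cnj a + b * cnj b = 1" by (simp add: norm_sum_squares_eq_1_iff)
  then show "conj_transpose y ** y = mat 1" "y ** conj_transpose y = mat 1"
    by (simp_all add: y conj_transpose_su2_mat su2_mat_mult mat_1_eq_su2_mat algebra_simps)
qed

lemma SU2_conj_transpose_mult_cancel:
  "x \<in> SU2 \<Longrightarrow> conj_transpose x ** (x ** z) = z"
  "x \<in> SU2 \<Longrightarrow> x ** (conj_transpose x ** z) = z"
  by (simp_all add: matrix_mul_assoc SU2_conj_transpose_mult matrix_mul_lid)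

lemma matrix_inv_SU2:
  assumes "y \<in> SU2"
  shows "matrix_inv y = conj_transpose y"
  unfolding matrix_inv_def
proof (rule some_equality)
  show "y ** conj_transpose y = mat 1 \<and> conj_transpose y ** y = mat 1"
    using SU2_conj_transpose_mult[OF assms] by simp
next
  fix A assume "y ** A = mat 1 \<and> A ** y = mat 1"
  then have "conj_transpose y ** (y ** A) = conj_transpose y" by (simp add: matrix_mul_rid)
  then show "A = conj_transpose y"
    by (simp add: matrix_mul_assoc SU2_conj_transpose_mult[OF assms] matrix_mul_lid)
qed

definition re11 :: "cmat2 \<Rightarrow> real" where "re11 y = Re (y $ 1 $ 1)"

lemma re11_conj_transpose [simp]: "re11 (conj_transpose y) = re11 y"
  by (simp add: re11_def)

lemma continuous_on_re11 [continuous_intros]: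
  "continuous_on S f \<Longrightarrow> continuous_on S (\<lambda>z. re11 (f z))"
  unfolding re11_def by (intro continuous_intros)

lemma continuous_on_matrix_mult_left [continuous_intros]:
  "continuous_on S f \<Longrightarrow> continuous_on S (\<lambda>z. (A::cmat2) ** f z)"
  unfolding matrix_matrix_mult_def by (intro continuous_intros)

lemma continuous_on_conj_transpose [continuous_intros]:
  "continuous_on S f \<Longrightarrow> continuous_on S (\<lambda>z. conj_transpose (f z))"
  unfolding conj_transpose_def by (intro continuous_intros)

lemma norm_le_1_of_sum_squares:
  assumes "(cmod a)\<^sup>2 + (cmod b)\<^sup>2 = 1"
  shows "cmod a \<le> 1"
proof -
  have "(cmod a)\<^sup>2 \<le> 1" using assms zero_le_power2[of "cmod b"] by linarith
  then have "(cmod a)\<^sup>2 \<le> 1\<^sup>2" by simp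
  then show ?thesis by (rule power2_le_imp_le) simp
qed

lemma abs_re11_le_1:
  assumes "y \<in> SU2"
  shows "\<bar>re11 y\<bar> \<le> 1"
proof -
  obtain a b where "y = su2_mat a b" "(cmod a)\<^sup>2 + (cmod b)\<^sup>2 = 1" using assms by (rule SU2_cases)
  then show ?thesis
    unfolding re11_def using abs_Re_le_cmod[of a] norm_le_1_of_sum_squares[of a b] by simp
qed

lemma su2_angle_SU2: "y \<in> SU2 \<Longrightarrow> su2_angle y = arccos (re11 y)"
  by (auto elim!: SU2_cases simp: su2_angle_def trace_def sum_2 re11_def)

lemma su2_dist_su2_mat:
  "su2_dist (su2_mat p q) (su2_mat r s) = sqrt ((cmod (p - r))\<^sup>2 + (cmod (q - s))\<^sup>2)"
proof -
  define u v where "u = p - r" "v = q - s"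
  have "su2_mat u v ** conj_transpose (su2_mat u v) = su2_mat (u * cnj u + v * cnj v) 0"
    by (simp add: conj_transpose_su2_mat su2_mat_mult algebra_simps)
  then have "Re (trace (su2_mat u v ** conj_transpose (su2_mat u v))) = 2 * ((cmod u)\<^sup>2 + (cmod v)\<^sup>2)"
    by (simp add: trace_def sum_2 flip: complex_norm_square)
  then show ?thesis unfolding su2_dist_def su2_mat_diff u_v_def[symmetric] by simp
qed

lemma abs_re11_translate_diff_le:
  assumes "x \<in> SU2" "a \<in> SU2" "b \<in> SU2"
  shows "\<bar>re11 (conj_transpose x ** a) - re11 (conj_transpose x ** b)\<bar> \<le> su2_dist a b"
proof -
  obtain c d where x: "x = su2_mat c d" "(cmod c)\<^sup>2 + (cmod d)\<^sup>2 = 1" using assms(1) by (rule SU2_cases)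
  obtain p q where a: "a = su2_mat p q" using assms(2) by (rule SU2_cases)
  obtain r s where b: "b = su2_mat r s" using assms(3) by (rule SU2_cases)
  have "re11 (conj_transpose x ** a) - re11 (conj_transpose x ** b) = Re (cnj c * (p - r) + d * cnj (q - s))"
    by (simp add: re11_def x a b conj_transpose_su2_mat su2_mat_mult algebra_simps)
  also have "\<bar>\<dots>\<bar> \<le> cmod c * cmod (p - r) + cmod d * cmod (q - s)"
    by (rule order.trans[OF abs_Re_le_cmod]) (metis norm_triangle_ineq complex_mod_cnj norm_mult)
  also have "\<dots> \<le> sqrt (((cmod c)\<^sup>2 + (cmod d)\<^sup>2) * ((cmod (p - r))\<^sup>2 + (cmod (q - s))\<^sup>2))"
    \<comment> \<open>Cauchy-Schwarz in the plane\<close>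
  proof (rule real_le_rsqrt)
    have "0 \<le> (cmod c * cmod (q - s) - cmod d * cmod (p - r))\<^sup>2" by simp
    then show "(cmod c * cmod (p - r) + cmod d * cmod (q - s))\<^sup>2
        \<le> ((cmod c)\<^sup>2 + (cmod d)\<^sup>2) * ((cmod (p - r))\<^sup>2 + (cmod (q - s))\<^sup>2)"
      by (simp add: power2_eq_square algebra_simps)
  qed
  also have "\<dots> = su2_dist a b" by (simp add: x(2) a b su2_dist_su2_mat)
  finally show ?thesis .
qed

lemma closed_SU2: "closed SU2"
proof -
  have "continuous_on UNIV (\<lambda>U::cmat2. U ** conj_transpose U)"
    unfolding matrix_matrix_mult_def conj_transpose_def by (intro continuous_intros)
  then have unitary: "closed {U::cmat2. U ** conj_transpose U = mat 1}"
    by (rule closed_Collect_eq[OF _ continuous_on_const])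
  have det: "closed {U::cmat2. det U = 1}"
    unfolding det_2 by (rule closed_Collect_eq) (intro continuous_intros)+
  have "SU2 = {U. U ** conj_transpose U = mat 1} \<inter> {U. det U = 1}"
    unfolding SU2_def by blast
  then show ?thesis using closed_Int[OF unitary det] by simp
qed

lemma norm_row_su2_mat: "norm (su2_mat a b $ i) = sqrt ((cmod a)\<^sup>2 + (cmod b)\<^sup>2)"
proof -
  have "i = 1 \<or> i = 2" by (rule exhaust_2)
  then show ?thesis by (auto simp: norm_vec_def L2_set_def sum_2 add.commute)
qed

lemma norm_SU2:
  assumes "y \<in> SU2"
  shows "norm y = sqrt 2"
proof -
  obtain a b where y: "y = su2_mat a b" "(cmod a)\<^sup>2 + (cmod b)\<^sup>2 = 1" using assms by (rule SU2_cases)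
  then have "norm (y $ i) = 1" for i by (simp add: norm_row_su2_mat)
  then show ?thesis by (simp add: norm_vec_def L2_set_def sum_2)
qed

lemma compact_SU2: "compact SU2"
  unfolding compact_eq_bounded_closed bounded_iff
  using closed_SU2 norm_SU2 by (auto intro!: exI[of _ "sqrt 2"])

lemma haar_space: "is_haar_SU2 \<mu> \<Longrightarrow> space \<mu> = SU2"
  by (simp add: is_haar_SU2_def)

lemma haar_finite_measure: "is_haar_SU2 \<mu> \<Longrightarrow> finite_measure \<mu>"
  by (rule finite_measureI) (auto simp: is_haar_SU2_def)

lemma haar_measure_space: "is_haar_SU2 \<mu> \<Longrightarrow> measure \<mu> (space \<mu>) = 1"
  by (auto simp: is_haar_SU2_def measure_def)

lemma haar_measurable_continuous:
  assumes "is_haar_SU2 \<mu>" "continuous_on SU2 F"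
  shows "F \<in> borel_measurable \<mu>"
proof -
  have "sets \<mu> = sets (restrict_space borel SU2)" using assms(1) by (simp add: is_haar_SU2_def)
  then show ?thesis
    using borel_measurable_continuous_on_restrict[OF assms(2)] measurable_cong_sets by blast
qed

lemma haar_integrable_continuous:
  fixes F :: "cmat2 \<Rightarrow> real"
  assumes "is_haar_SU2 \<mu>" "continuous_on SU2 F"
  shows "integrable \<mu> F"
proof -
  interpret finite_measure \<mu> using assms(1) by (rule haar_finite_measure)
  obtain B where "\<forall>y\<in>SU2. norm (F y) \<le> B"
    using compact_imp_bounded[OF compact_continuous_image[OF assms(2) compact_SU2]]
    unfolding bounded_iff by blast
  then show ?thesis
    using haar_space[OF assms(1)] haar_measurable_continuous[OF assms]
    by (intro integrable_const_bound[where B=B]) auto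
qed

lemma haar_integral_abs_le:
  fixes F :: "cmat2 \<Rightarrow> real"
  assumes h: "is_haar_SU2 \<mu>" and "continuous_on SU2 F" and "\<And>y. y \<in> SU2 \<Longrightarrow> \<bar>F y\<bar> \<le> B"
  shows "\<bar>\<integral>y. F y \<partial>\<mu>\<bar> \<le> B"
proof -
  have "\<bar>\<integral>y. F y \<partial>\<mu>\<bar> \<le> (\<integral>y. B \<partial>\<mu>)"
    using assms haar_space[OF h]
    by (intro integral_abs_bound_integral haar_integrable_continuous continuous_on_const) auto
  then show ?thesis by (simp add: haar_measure_space[OF h])
qed

lemma haar_measurable_left_mult:
  assumes "is_haar_SU2 \<mu>" "g \<in> SU2"
  shows "(\<lambda>y. g ** y) \<in> measurable \<mu> \<mu>"
proof -
  have s: "sets \<mu> = sets (restrict_space borel SU2)" using assms(1) by (simp add: is_haar_SU2_def)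
  have "continuous_on UNIV (\<lambda>y::cmat2. g ** y)" by (intro continuous_intros)
  then have "(\<lambda>y. g ** y) \<in> measurable (restrict_space borel SU2) (restrict_space borel SU2)"
    using assms(2) SU2_mult_closed
    by (intro measurable_restrict_space3 borel_measurable_continuous_onI) auto
  then show ?thesis by (simp add: measurable_cong_sets[OF s s])
qed

lemma haar_distr_left_mult:
  assumes h: "is_haar_SU2 \<mu>" and g: "g \<in> SU2"
  shows "distr \<mu> \<mu> (\<lambda>y. g ** y) = \<mu>"
proof (rule measure_eqI)
  fix A assume "A \<in> sets (distr \<mu> \<mu> (\<lambda>y. g ** y))"
  then have A: "A \<in> sets \<mu>" by simp
  then have "A \<subseteq> SU2" using sets.sets_into_space haar_space[OF h] by blast
  then have "(\<lambda>y. g ** y) -` A \<inter> space \<mu> = (\<lambda>y. conj_transpose g ** y) ` A"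
    using g haar_space[OF h]
    by (auto simp: SU2_conj_transpose_mult_cancel intro: SU2_mult_closed conj_transpose_in_SU2
        image_eqI[where x="g ** _"] dest: SU2_mult_closed[OF conj_transpose_in_SU2[OF g]])
  then have "emeasure (distr \<mu> \<mu> (\<lambda>y. g ** y)) A = emeasure \<mu> ((\<lambda>y. conj_transpose g ** y) ` A)"
    using A haar_measurable_left_mult[OF h g] by (simp add: emeasure_distr)
  also have "\<dots> = emeasure \<mu> A"
    using h conj_transpose_in_SU2[OF g] A by (simp add: is_haar_SU2_def)
  finally show "emeasure (distr \<mu> \<mu> (\<lambda>y. g ** y)) A = emeasure \<mu> A" .
qed simp

lemma haar_integral_left_mult:
  fixes F :: "cmat2 \<Rightarrow> real"
  assumes h: "is_haar_SU2 \<mu>" and g: "g \<in> SU2" and F: "F \<in> borel_measurable \<mu>"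
  shows "(\<integral>y. F (g ** y) \<partial>\<mu>) = (\<integral>y. F y \<partial>\<mu>)"
  using integral_distr[OF haar_measurable_left_mult[OF h g] F] haar_distr_left_mult[OF h g] by simp

section \<open>Moments of the trace\<close>

definition im11 :: "cmat2 \<Rightarrow> real" where "im11 y = Im (y $ 1 $ 1)"
definition re12 :: "cmat2 \<Rightarrow> real" where "re12 y = Re (y $ 1 $ 2)"
definition im12 :: "cmat2 \<Rightarrow> real" where "im12 y = Im (y $ 1 $ 2)"

lemma continuous_on_coords [continuous_intros]:
  "continuous_on S im11" "continuous_on S re12" "continuous_on S im12"
  unfolding im11_def re12_def im12_def by (intro continuous_intros)+

lemma coords_sum_squares_SU2:
  "y \<in> SU2 \<Longrightarrow> (re11 y)\<^sup>2 + (im11 y)\<^sup>2 + (re12 y)\<^sup>2 + (im12 y)\<^sup>2 = 1"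
  by (auto elim!: SU2_cases simp: re11_def im11_def re12_def im12_def cmod_power2)

lemma re11_su2_mat_mult:
  assumes "y \<in> SU2"
  shows "re11 (su2_mat c d ** y) = Re c * re11 y - Im c * im11 y - Re d * re12 y - Im d * im12 y"
  using assms by (auto elim!: SU2_cases simp: su2_mat_mult re11_def im11_def re12_def im12_def)

lemma SU2_rotations:
  fixes \<phi> :: real
  shows "\<exists>g\<in>SU2. \<forall>y\<in>SU2. re11 (g ** y) = cos \<phi> * re11 y - sin \<phi> * im11 y"
    and "\<exists>g\<in>SU2. \<forall>y\<in>SU2. re11 (g ** y) = cos \<phi> * re11 y - sin \<phi> * re12 y"
    and "\<exists>g\<in>SU2. \<forall>y\<in>SU2. re11 (g ** y) = cos \<phi> * re11 y - sin \<phi> * im12 y"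
proof -
  show "\<exists>g\<in>SU2. \<forall>y\<in>SU2. re11 (g ** y) = cos \<phi> * re11 y - sin \<phi> * im11 y"
    by (rule bexI[of _ "su2_mat (cis \<phi>) 0"]) (simp_all add: re11_su2_mat_mult su2_mat_in_SU2_iff)
  show "\<exists>g\<in>SU2. \<forall>y\<in>SU2. re11 (g ** y) = cos \<phi> * re11 y - sin \<phi> * re12 y"
    by (rule bexI[of _ "su2_mat (cos \<phi>) (sin \<phi>)"]) (simp_all add: re11_su2_mat_mult su2_mat_in_SU2_iff)
  show "\<exists>g\<in>SU2. \<forall>y\<in>SU2. re11 (g ** y) = cos \<phi> * re11 y - sin \<phi> * im12 y"
    by (rule bexI[of _ "su2_mat (cos \<phi>) (\<i> * sin \<phi>)"])
      (simp_all add: re11_su2_mat_mult su2_mat_in_SU2_iff norm_mult)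
qed

lemma sum_atMost_double:
  fixes f :: "nat \<Rightarrow> 'a::comm_monoid_add"
  shows "(\<Sum>i\<le>2*r. f i) = (\<Sum>l\<le>r. f (2*l)) + (\<Sum>l<r. f (2*l+1))"
  by (induction r) (simp_all add: numeral_2_eq_2 add_ac)

lemma one_plus_square_power:
  "(1 + w\<^sup>2)^r = (\<Sum>i\<le>2*r. (if even i then real (r choose (i div 2)) else 0) * (w::real)^i)"
proof -
  have "(1 + w\<^sup>2)^r = (\<Sum>k\<le>r. real (r choose k) * w^(2*k))"
    by (subst add.commute) (simp add: binomial_ring power_mult)
  also have "\<dots> = (\<Sum>i\<le>2*r. (if even i then real (r choose (i div 2)) else 0) * w^i)"
    unfolding sum_atMost_double by simp
  finally show ?thesis .
qed

lemma trig_form_constant_coeff2: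
  fixes c :: "nat \<Rightarrow> real"
  assumes r: "1 \<le> r"
    and const: "\<And>\<phi>. (\<Sum>i\<le>2*r. c i * (cos \<phi> ^ (2*r-i) * sin \<phi> ^ i)) = c 0"
  shows "c 2 = real r * c 0"
proof -
  define d where "d i = (if even i then real (r choose (i div 2)) else 0)" for i
  \<comment> \<open>at \<open>\<phi> = arctan w\<close> we have \<open>cos \<phi> = 1/s\<close> and \<open>sin \<phi> = w/s\<close> with \<open>s\<^sup>2 = 1 + w\<^sup>2\<close>\<close>
  have "(\<Sum>i\<le>2*r. c i * w^i) = (\<Sum>i\<le>2*r. (c 0 * d i) * w^i)" for w :: real
  proof -
    define s where "s = sqrt (1 + w\<^sup>2)"
    have s: "s > 0" "s\<^sup>2 = 1 + w\<^sup>2" unfolding s_def by (simp_all add: add_pos_nonneg)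
    have scaled: "c i * ((1/s) ^ (2*r-i) * (w/s) ^ i) * s^(2*r) = c i * w^i" if "i \<le> 2*r" for i
    proof -
      obtain j where j: "2*r = i + j" using \<open>i \<le> 2*r\<close> le_iff_add by blast
      have "c i * ((1/s) ^ j * (w/s) ^ i) * s^(i+j) = c i * (((1/s)^j * s^j) * ((w/s)^i * s^i))"
        by (simp add: power_add mult_ac)
      also have "\<dots> = c i * w^i" using s(1) by (simp add: power_divide)
      finally show ?thesis by (simp add: j)
    qed
    have "(\<Sum>i\<le>2*r. c i * w^i) = (\<Sum>i\<le>2*r. c i * ((1/s) ^ (2*r-i) * (w/s) ^ i)) * s^(2*r)"
      unfolding sum_distrib_right by (rule sum.cong) (simp_all add: scaled)
    also have "\<dots> = c 0 * (1 + w\<^sup>2)^r"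
      using const[of "arctan w"] s(2) by (simp add: cos_arctan sin_arctan s_def power_mult)
    also have "\<dots> = (\<Sum>i\<le>2*r. (c 0 * d i) * w^i)"
      unfolding one_plus_square_power d_def by (simp add: sum_distrib_left mult.assoc)
    finally show ?thesis .
  qed
  then have coeffs: "\<forall>i\<le>2*r. c i = c 0 * d i"
    using polyfun_eq_coeffs[where n="2*r" and c=c and d="\<lambda>i. c 0 * d i"] by blast
  have "2 \<le> 2*r" using r by simp
  then have "c 2 = c 0 * d 2" using coeffs by blast
  then show ?thesis by (simp add: d_def)
qed

definition haar_moment :: "cmat2 measure \<Rightarrow> nat \<Rightarrow> real" where
  "haar_moment \<mu> k = (\<integral>y. re11 y ^ k \<partial>\<mu>)"

lemma haar_moment_binomial_rotation:
  fixes Z :: "cmat2 \<Rightarrow> real"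
  assumes h: "is_haar_SU2 \<mu>" and Z: "continuous_on SU2 Z" and g: "g \<in> SU2"
    and rot: "\<forall>y\<in>SU2. re11 (g ** y) = cos \<phi> * re11 y - sin \<phi> * Z y"
  shows "(\<Sum>i\<le>k. real (k choose i) * (-1)^i * (cos \<phi> ^ (k-i) * sin \<phi> ^ i)
      * (\<integral>y. re11 y ^ (k-i) * Z y ^ i \<partial>\<mu>)) = haar_moment \<mu> k"
proof -
  have int: "integrable \<mu> (\<lambda>y. re11 y ^ a * Z y ^ b)" for a b
    by (intro haar_integrable_continuous[OF h] continuous_intros Z)
  have "(\<Sum>i\<le>k. real (k choose i) * (-1)^i * (cos \<phi> ^ (k-i) * sin \<phi> ^ i)
      * (\<integral>y. re11 y ^ (k-i) * Z y ^ i \<partial>\<mu>))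
      = (\<integral>y. (\<Sum>i\<le>k. real (k choose i) * (-1)^i * (cos \<phi> ^ (k-i) * sin \<phi> ^ i)
        * (re11 y ^ (k-i) * Z y ^ i)) \<partial>\<mu>)"
    by (subst Bochner_Integration.integral_sum) (auto intro: integrable_mult_right int)
  also have "\<dots> = (\<integral>y. re11 (g ** y) ^ k \<partial>\<mu>)"
  proof (rule Bochner_Integration.integral_cong[OF refl])
    fix y assume "y \<in> space \<mu>"
    then have "re11 (g ** y) ^ k = ((- sin \<phi> * Z y) + cos \<phi> * re11 y) ^ k"
      using rot haar_space[OF h] by simp
    also have "\<dots> = (\<Sum>i\<le>k. real (k choose i) * (- sin \<phi> * Z y) ^ i * (cos \<phi> * re11 y) ^ (k - i))"
      by (rule binomial_ring)
    finally show "(\<Sum>i\<le>k. real (k choose i) * (-1)^i * (cos \<phi> ^ (k-i) * sin \<phi> ^ i)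
        * (re11 y ^ (k-i) * Z y ^ i)) = re11 (g ** y) ^ k"
      by (simp add: power_mult_distrib power_minus[of "sin \<phi> * Z y"] mult_ac)
  qed
  also have "\<dots> = haar_moment \<mu> k"
    using haar_integral_left_mult[OF h g, of "\<lambda>y. re11 y ^ k"]
    by (simp add: haar_moment_def haar_measurable_continuous[OF h] continuous_intros)
  finally show ?thesis .
qed

lemma haar_moment_rotation:
  fixes Z :: "cmat2 \<Rightarrow> real"
  assumes h: "is_haar_SU2 \<mu>" and Z: "continuous_on SU2 Z"
    and rot: "\<And>\<phi>. \<exists>g\<in>SU2. \<forall>y\<in>SU2. re11 (g ** y) = cos \<phi> * re11 y - sin \<phi> * Z y"
  shows "(2 * real r + 1) * (\<integral>y. re11 y ^ (2*r) * Z y ^ 2 \<partial>\<mu>) = haar_moment \<mu> (2*r + 2)"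
proof -
  define k where "k = 2 * Suc r"
  define c where "c i = real (k choose i) * (-1)^i * (\<integral>y. re11 y ^ (k-i) * Z y ^ i \<partial>\<mu>)" for i
  have "(\<Sum>i\<le>k. c i * (cos \<phi> ^ (k-i) * sin \<phi> ^ i)) = c 0" for \<phi>
  proof -
    obtain g where "g \<in> SU2" "\<forall>y\<in>SU2. re11 (g ** y) = cos \<phi> * re11 y - sin \<phi> * Z y"
      using rot by blast
    from haar_moment_binomial_rotation[OF h Z this, of k] show ?thesis
      by (simp add: c_def haar_moment_def mult_ac)
  qed
  then have "c 2 = real (Suc r) * c 0"
    by (intro trig_form_constant_coeff2) (simp_all add: k_def)
  moreover have "real (k choose 2) = real (Suc r) * (2 * real r + 1)"
    by (simp add: k_def choose_two algebra_simps)
  ultimately show ?thesis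
    by (simp add: c_def k_def haar_moment_def del: of_nat_Suc)
qed

lemma haar_moment_0: "is_haar_SU2 \<mu> \<Longrightarrow> haar_moment \<mu> 0 = 1"
  by (simp add: haar_moment_def haar_measure_space)

lemma haar_moment_odd:
  assumes h: "is_haar_SU2 \<mu>" and k: "odd k"
  shows "haar_moment \<mu> k = 0"
proof -
  \<comment> \<open>left multiplication by \<open>-1\<close> changes the sign of \<open>re11\<close>\<close>
  have g: "su2_mat (-1) 0 \<in> SU2" by (simp add: su2_mat_in_SU2_iff)
  have "haar_moment \<mu> k = (\<integral>y. re11 (su2_mat (-1) 0 ** y) ^ k \<partial>\<mu>)"
    using haar_integral_left_mult[OF h g, of "\<lambda>y. re11 y ^ k"]
    by (simp add: haar_moment_def haar_measurable_continuous[OF h] continuous_intros)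
  also have "\<dots> = (\<integral>y. - (re11 y ^ k) \<partial>\<mu>)"
    using k haar_space[OF h] by (intro Bochner_Integration.integral_cong) (simp_all add: re11_su2_mat_mult)
  finally show ?thesis by (simp add: haar_moment_def)
qed

lemma haar_moment_sphere:
  assumes h: "is_haar_SU2 \<mu>"
  shows "(\<integral>y. re11 y ^ k * im11 y ^ 2 \<partial>\<mu>) + (\<integral>y. re11 y ^ k * re12 y ^ 2 \<partial>\<mu>)
    + (\<integral>y. re11 y ^ k * im12 y ^ 2 \<partial>\<mu>) = haar_moment \<mu> k - haar_moment \<mu> (k + 2)"
proof -
  have int: "integrable \<mu> (\<lambda>y. re11 y ^ k * Z y ^ 2)" if "Z \<in> {im11, re12, im12}" for Z
    using that by (auto intro!: haar_integrable_continuous[OF h] continuous_intros)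
  have "(\<integral>y. re11 y ^ k * im11 y ^ 2 \<partial>\<mu>) + (\<integral>y. re11 y ^ k * re12 y ^ 2 \<partial>\<mu>)
      + (\<integral>y. re11 y ^ k * im12 y ^ 2 \<partial>\<mu>)
      = (\<integral>y. re11 y ^ k * im11 y ^ 2 + re11 y ^ k * re12 y ^ 2 + re11 y ^ k * im12 y ^ 2 \<partial>\<mu>)"
    by (simp add: int)
  also have "\<dots> = (\<integral>y. re11 y ^ k - re11 y ^ (k + 2) \<partial>\<mu>)"
  proof (rule Bochner_Integration.integral_cong[OF refl])
    fix y assume "y \<in> space \<mu>"
    then have "im11 y ^ 2 + re12 y ^ 2 + im12 y ^ 2 = 1 - re11 y ^ 2"
      using coords_sum_squares_SU2[of y] haar_space[OF h] by simp
    then have "re11 y ^ k * (im11 y ^ 2 + re12 y ^ 2 + im12 y ^ 2) = re11 y ^ k - re11 y ^ (k + 2)"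
      by (simp add: right_diff_distrib power_add power2_eq_square)
    then show "re11 y ^ k * im11 y ^ 2 + re11 y ^ k * re12 y ^ 2 + re11 y ^ k * im12 y ^ 2
        = re11 y ^ k - re11 y ^ (k + 2)"
      by (simp only: distrib_left)
  qed
  also have "\<dots> = haar_moment \<mu> k - haar_moment \<mu> (k + 2)"
    unfolding haar_moment_def
    by (intro Bochner_Integration.integral_diff haar_integrable_continuous[OF h] continuous_intros)
  finally show ?thesis .
qed

lemma haar_moment_recurrence:
  assumes h: "is_haar_SU2 \<mu>"
  shows "haar_moment \<mu> (k+2) * (real k + 4) = (real k + 1) * haar_moment \<mu> k"
proof (cases "odd k")
  case True
  then show ?thesis using haar_moment_odd[OF h] by simp
next
  case False
  then obtain r where k: "k = 2 * r" by blast
  define I where "I Z = (\<integral>y. re11 y ^ (2*r) * Z y ^ 2 \<partial>\<mu>)" for Z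
  have rotations: "(2 * real r + 1) * I im11 = haar_moment \<mu> (2*r + 2)"
    "(2 * real r + 1) * I re12 = haar_moment \<mu> (2*r + 2)"
    "(2 * real r + 1) * I im12 = haar_moment \<mu> (2*r + 2)"
    unfolding I_def
    by (rule haar_moment_rotation[OF h continuous_on_coords(1) SU2_rotations(1)]
        haar_moment_rotation[OF h continuous_on_coords(2) SU2_rotations(2)]
        haar_moment_rotation[OF h continuous_on_coords(3) SU2_rotations(3)])+
  have "(2 * real r + 1) * (haar_moment \<mu> (2*r) - haar_moment \<mu> (2*r + 2))
      = (2 * real r + 1) * I im11 + (2 * real r + 1) * I re12 + (2 * real r + 1) * I im12"
    unfolding haar_moment_sphere[OF h, symmetric] I_def by (simp only: distrib_left)
  also have "\<dots> = 3 * haar_moment \<mu> (2*r + 2)"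
    unfolding rotations by simp
  finally show ?thesis by (simp add: k algebra_simps)
qed

section \<open>The Weyl integration formula for polynomials in the trace\<close>

lemma fundamental_theorem_of_calculus_real:
  fixes F f :: "real \<Rightarrow> real"
  assumes "a \<le> b" "\<And>x. (F has_real_derivative f x) (at x)"
  shows "(f has_integral (F b - F a)) {a..b}"
  using assms by (intro fundamental_theorem_of_calculus)
    (auto simp: has_real_derivative_iff_has_vector_derivative[symmetric] intro: has_field_derivative_at_within)

definition cos_pow_sin2_integral :: "nat \<Rightarrow> real" where
  "cos_pow_sin2_integral k = integral {0..pi} (\<lambda>\<theta>. cos \<theta> ^ k * sin \<theta> ^ 2)"

lemma cos_pow_sin2_integrable: "(\<lambda>\<theta>. cos \<theta> ^ k * sin \<theta> ^ 2) integrable_on {0..pi}"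
  by (intro integrable_continuous_interval continuous_intros)

lemma cos_pow_sin2_integral_0: "cos_pow_sin2_integral 0 = pi / 2"
proof -
  have "((\<lambda>\<theta>. \<theta>/2 - sin (2*\<theta>)/4) has_real_derivative (sin \<theta>)\<^sup>2) (at \<theta>)" for \<theta>
  proof -
    have "((\<lambda>\<theta>. \<theta>/2 - sin (2*\<theta>)/4) has_real_derivative (1/2 - cos (2*\<theta>) * 2 / 4)) (at \<theta>)"
      by (auto intro!: derivative_eq_intros)
    moreover have "1/2 - cos (2*\<theta>) * 2 / 4 = (sin \<theta>)\<^sup>2"
      unfolding cos_double_sin by (simp add: field_simps)
    ultimately show ?thesis by simp
  qed
  from fundamental_theorem_of_calculus_real[OF _ this, of 0 pi] show ?thesis
    by (simp add: cos_pow_sin2_integral_def integral_unique)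
qed

lemma cos_pow_sin2_integral_1: "cos_pow_sin2_integral 1 = 0"
proof -
  have "((\<lambda>\<theta>. sin \<theta> ^ 3 / 3) has_real_derivative (cos \<theta> * sin \<theta> ^ 2)) (at \<theta>)" for \<theta>
    by (auto intro!: derivative_eq_intros)
  from fundamental_theorem_of_calculus_real[OF _ this, of 0 pi] show ?thesis
    by (simp add: cos_pow_sin2_integral_def integral_unique)
qed

lemma has_real_derivative_cos_pow_sin_cube:
  "((\<lambda>\<theta>. cos \<theta> ^ (k+1) * sin \<theta> ^ 3) has_real_derivative
    (real k + 4) * (cos \<theta> ^ (k+2) * sin \<theta> ^ 2) - (real k + 1) * (cos \<theta> ^ k * sin \<theta> ^ 2)) (at \<theta>)"
proof -
  have cos: "((\<lambda>\<theta>. cos \<theta> ^ (k+1)) has_real_derivative real (k+1) * (- sin \<theta>) * cos \<theta> ^ k) (at \<theta>)"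
    using DERIV_power[OF DERIV_cos[of \<theta>], where n="k+1"] by (simp add: mult.assoc)
  have sin: "((\<lambda>\<theta>. sin \<theta> ^ 3) has_real_derivative real 3 * cos \<theta> * sin \<theta> ^ 2) (at \<theta>)"
    using DERIV_power[OF DERIV_sin[of \<theta>], where n=3] by (simp add: mult.assoc)
  have identity: "u\<^sup>2 + v\<^sup>2 = 1 \<Longrightarrow> (K + 1) * (- v) * P * v ^ 3 + 3 * u * v\<^sup>2 * (P * u)
      = (K + 4) * (P * u\<^sup>2 * v\<^sup>2) - (K + 1) * (P * v\<^sup>2)" for u v K P :: real
    by algebra
  have "cos \<theta> ^ (k+1) = cos \<theta> ^ k * cos \<theta>" "cos \<theta> ^ (k+2) = cos \<theta> ^ k * (cos \<theta>)\<^sup>2"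
    by (simp_all add: power_add power2_eq_square)
  then have "real (k+1) * (- sin \<theta>) * cos \<theta> ^ k * sin \<theta> ^ 3 + real 3 * cos \<theta> * sin \<theta> ^ 2 * cos \<theta> ^ (k+1)
      = (real k + 4) * (cos \<theta> ^ (k+2) * sin \<theta> ^ 2) - (real k + 1) * (cos \<theta> ^ k * sin \<theta> ^ 2)"
    unfolding of_nat_add of_nat_1 of_nat_numeral by (simp only: identity[OF sin_cos_squared_add2])
  with DERIV_mult[OF cos sin] show ?thesis by simp
qed

lemma cos_pow_sin2_integral_recurrence:
  "cos_pow_sin2_integral (k+2) * (real k + 4) = (real k + 1) * cos_pow_sin2_integral k"
proof -
  \<comment> \<open>integration by parts: the antiderivative \<open>cos \<theta> ^ (k+1) * sin \<theta> ^ 3\<close> vanishes at both ends\<close>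
  from fundamental_theorem_of_calculus_real[OF _ has_real_derivative_cos_pow_sin_cube, of 0 pi k]
  have "((\<lambda>\<theta>. (real k + 4) * (cos \<theta> ^ (k+2) * sin \<theta> ^ 2) - (real k + 1) * (cos \<theta> ^ k * sin \<theta> ^ 2))
      has_integral 0) {0..pi}"
    by simp
  moreover have "((\<lambda>\<theta>. (real k + 4) * (cos \<theta> ^ (k+2) * sin \<theta> ^ 2) - (real k + 1) * (cos \<theta> ^ k * sin \<theta> ^ 2))
      has_integral ((real k + 4) * cos_pow_sin2_integral (k+2) - (real k + 1) * cos_pow_sin2_integral k)) {0..pi}"
    unfolding cos_pow_sin2_integral_def
    by (intro has_integral_diff has_integral_mult_right integrable_integral cos_pow_sin2_integrable)
  ultimately have "(real k + 4) * cos_pow_sin2_integral (k+2) - (real k + 1) * cos_pow_sin2_integral k = 0"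
    by (rule has_integral_unique[symmetric])
  then show ?thesis by (simp add: algebra_simps)
qed

lemma haar_moment_eq_cos_pow_sin2_integral:
  assumes h: "is_haar_SU2 \<mu>"
  shows "haar_moment \<mu> k = 2 / pi * cos_pow_sin2_integral k"
proof (induction k rule: nat_induct2)
  case 0
  then show ?case by (simp add: haar_moment_0[OF h] cos_pow_sin2_integral_0)
next
  case 1
  then show ?case using haar_moment_odd[OF h, of 1] cos_pow_sin2_integral_1 by simp
next
  case (step k)
  have "haar_moment \<mu> (k+2) * (real k + 4) = 2 / pi * cos_pow_sin2_integral (k+2) * (real k + 4)"
    using haar_moment_recurrence[OF h, of k] cos_pow_sin2_integral_recurrence[of k] step
    by (simp add: algebra_simps)
  moreover have "real k + 4 \<noteq> 0" by simp
  ultimately show ?case by (rule mult_right_cancel[THEN iffD1, rotated])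
qed

definition haar_poly_mean :: "cmat2 measure \<Rightarrow> real poly \<Rightarrow> real" where
  "haar_poly_mean \<mu> p = (\<integral>y. poly p (re11 y) \<partial>\<mu>)"

lemma haar_integrable_poly_re11: "is_haar_SU2 \<mu> \<Longrightarrow> integrable \<mu> (\<lambda>y. poly p (re11 y))"
  by (intro haar_integrable_continuous continuous_intros) auto

lemma haar_poly_mean_linear:
  assumes "is_haar_SU2 \<mu>"
  shows "haar_poly_mean \<mu> (p + q) = haar_poly_mean \<mu> p + haar_poly_mean \<mu> q"
    and "haar_poly_mean \<mu> (p - q) = haar_poly_mean \<mu> p - haar_poly_mean \<mu> q"
    and "haar_poly_mean \<mu> (smult c p) = c * haar_poly_mean \<mu> p"
    and "haar_poly_mean \<mu> (\<Sum>n\<in>A. f n) = (\<Sum>n\<in>A. haar_poly_mean \<mu> (f n))"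
  using haar_integrable_poly_re11[OF assms]
  by (auto simp: haar_poly_mean_def poly_sum Bochner_Integration.integral_sum
      intro: Bochner_Integration.integral_add Bochner_Integration.integral_diff)

lemma haar_poly_mean_eq_integral:
  assumes h: "is_haar_SU2 \<mu>"
  shows "haar_poly_mean \<mu> p = 2 / pi * integral {0..pi} (\<lambda>\<theta>. poly p (cos \<theta>) * sin \<theta> ^ 2)"
proof -
  have "haar_poly_mean \<mu> p = (\<Sum>i\<le>degree p. coeff p i * haar_moment \<mu> i)"
    unfolding haar_poly_mean_def poly_altdef haar_moment_def
    by (subst Bochner_Integration.integral_sum)
       (auto intro!: integrable_mult_right haar_integrable_continuous[OF h] continuous_intros)
  also have "\<dots> = 2 / pi * (\<Sum>i\<le>degree p. coeff p i * cos_pow_sin2_integral i)"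
    by (simp add: haar_moment_eq_cos_pow_sin2_integral[OF h] sum_distrib_left mult_ac)
  also have "(\<Sum>i\<le>degree p. coeff p i * cos_pow_sin2_integral i)
      = integral {0..pi} (\<lambda>\<theta>. poly p (cos \<theta>) * sin \<theta> ^ 2)"
    unfolding poly_altdef sum_distrib_right cos_pow_sin2_integral_def
    by (subst integral_sum) (auto simp: mult.assoc intro!: integrable_on_mult_right cos_pow_sin2_integrable)
  finally show ?thesis .
qed

section \<open>Characters as Chebyshev polynomials\<close>

fun cheb_U :: "nat \<Rightarrow> real poly" where
  "cheb_U 0 = 1"
| "cheb_U (Suc 0) = [:0, 2:]"
| "cheb_U (Suc (Suc n)) = [:0, 2:] * cheb_U (Suc n) - cheb_U n"

lemma poly_cheb_U_cos: "poly (cheb_U n) (cos \<theta>) * sin \<theta> = sin (real (Suc n) * \<theta>)"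
proof (induction n rule: cheb_U.induct)
  case 1
  then show ?case by simp
next
  case 2
  then show ?case by (simp add: sin_double)
next
  case (3 n)
  define x where "x = real (Suc (Suc n)) * \<theta>"
  have x: "real (Suc (Suc (Suc n))) * \<theta> = x + \<theta>" "real (Suc n) * \<theta> = x - \<theta>"
    by (simp_all add: x_def algebra_simps)
  have "poly (cheb_U (Suc (Suc n))) (cos \<theta>) * sin \<theta>
      = 2 * cos \<theta> * (poly (cheb_U (Suc n)) (cos \<theta>) * sin \<theta>) - poly (cheb_U n) (cos \<theta>) * sin \<theta>"
    by (simp add: algebra_simps)
  also have "\<dots> = 2 * cos \<theta> * sin x - sin (x - \<theta>)"
    using 3 unfolding x(2)[symmetric] by (simp add: x_def)
  also have "\<dots> = sin (x + \<theta>)" by (simp add: sin_add sin_diff algebra_simps)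
  finally show ?case by (simp only: x(1))
qed

lemma poly_cheb_U_1: "poly (cheb_U n) 1 = real n + 1"
  by (induction n rule: cheb_U.induct) (simp_all add: algebra_simps)

lemma poly_cheb_U_minus_1: "poly (cheb_U n) (-1) = (-1)^n * (real n + 1)"
  by (induction n rule: cheb_U.induct) (simp_all add: algebra_simps)

declare cheb_U.simps(3) [simp del]

lemma abs_sin_mult_le: "\<bar>sin (real (Suc n) * \<theta>)\<bar> \<le> real (Suc n) * \<bar>sin \<theta>\<bar>"
proof (induction n)
  case 0
  then show ?case by simp
next
  case (Suc n)
  have e: "real (Suc (Suc n)) * \<theta> = real (Suc n) * \<theta> + \<theta>" by (simp add: algebra_simps)
  have "\<bar>sin (real (Suc (Suc n)) * \<theta>)\<bar>
      \<le> \<bar>sin (real (Suc n) * \<theta>)\<bar> * \<bar>cos \<theta>\<bar> + \<bar>cos (real (Suc n) * \<theta>)\<bar> * \<bar>sin \<theta>\<bar>"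
    unfolding e sin_add by (metis abs_mult abs_triangle_ineq)
  also have "\<dots> \<le> real (Suc n) * \<bar>sin \<theta>\<bar> * 1 + 1 * \<bar>sin \<theta>\<bar>"
    by (intro add_mono mult_mono Suc) (simp_all add: abs_cos_le_one)
  finally show ?case by (simp add: algebra_simps)
qed

lemma abs_poly_cheb_U_le:
  assumes "\<bar>t\<bar> \<le> 1"
  shows "\<bar>poly (cheb_U n) t\<bar> \<le> real n + 1"
proof -
  define \<theta> where "\<theta> = arccos t"
  have t: "cos \<theta> = t" using assms by (simp add: \<theta>_def cos_arccos_abs)
  show ?thesis
  proof (cases "sin \<theta> = 0")
    case True
    then have "(cos \<theta>)\<^sup>2 = 1" using sin_squared_eq[of \<theta>] by simp
    then have "t = 1 \<or> t = -1" using t by (simp add: power2_eq_1_iff)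
    then show ?thesis by (auto simp: poly_cheb_U_1 poly_cheb_U_minus_1 abs_mult)
  next
    case False
    have "\<bar>poly (cheb_U n) t\<bar> * \<bar>sin \<theta>\<bar> = \<bar>sin (real (Suc n) * \<theta>)\<bar>"
      using poly_cheb_U_cos[of n \<theta>] t by (simp add: abs_mult[symmetric])
    also have "\<dots> \<le> (real n + 1) * \<bar>sin \<theta>\<bar>" using abs_sin_mult_le[of n \<theta>] by (simp add: add.commute)
    finally show ?thesis using False by simp
  qed
qed

lemma su2_char_eq_cheb_U:
  assumes "y \<in> SU2"
  shows "su2_char n y = poly (cheb_U n) (re11 y)"
proof -
  define \<theta> where "\<theta> = arccos (re11 y)"
  have t: "cos \<theta> = re11 y" "0 \<le> \<theta>" "\<theta> \<le> pi"
    using abs_re11_le_1[OF assms] by (simp_all add: \<theta>_def cos_arccos_abs arccos_lbound arccos_ubound)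
  have angle: "su2_angle y = \<theta>" by (simp add: su2_angle_SU2[OF assms] \<theta>_def)
  consider "\<theta> = 0" | "\<theta> = pi" | "0 < \<theta>" "\<theta> < pi" using t by linarith
  then show ?thesis
  proof cases
    case 1
    then have "re11 y = 1" using t by simp
    then show ?thesis using 1 by (simp add: su2_char_def angle poly_cheb_U_1)
  next
    case 2
    then have "re11 y = -1" using t by simp
    then show ?thesis using 2 by (simp add: su2_char_def angle poly_cheb_U_minus_1)
  next
    case 3
    then have "sin \<theta> > 0" by (intro sin_gt_zero)
    then show ?thesis
      using poly_cheb_U_cos[of n \<theta>] 3 t by (simp add: su2_char_def angle field_simps)
  qed
qed

lemma integral_sin_mult_sin_same:
  assumes "1 \<le> a"
  shows "integral {0..pi} (\<lambda>\<theta>. sin (real a * \<theta>) * sin (real a * \<theta>)) = pi / 2"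
proof -
  define F where "F \<theta> = \<theta>/2 - sin (2 * real a * \<theta>) / (4 * real a)" for \<theta> :: real
  have "(F has_real_derivative (sin (real a * \<theta>) * sin (real a * \<theta>))) (at \<theta>)" for \<theta>
  proof -
    have "(F has_real_derivative (1/2 - cos (2 * real a * \<theta>) * (2 * real a) / (4 * real a))) (at \<theta>)"
      unfolding F_def by (auto intro!: derivative_eq_intros)
    moreover have "1/2 - cos (2 * real a * \<theta>) * (2 * real a) / (4 * real a) = sin (real a * \<theta>) * sin (real a * \<theta>)"
      using cos_double_sin[of "real a * \<theta>"] assms by (simp add: field_simps power2_eq_square mult.assoc)
    ultimately show ?thesis by simp
  qed
  from fundamental_theorem_of_calculus_real[OF _ this, of 0 pi]
  show ?thesis using sin_npi[of "2 * a"] by (simp add: integral_unique F_def mult.assoc)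
qed

lemma integral_sin_mult_sin_less:
  assumes "b < a"
  shows "integral {0..pi} (\<lambda>\<theta>. sin (real a * \<theta>) * sin (real b * \<theta>)) = 0"
proof -
  define d s where "d = real (a - b)" and "s = real (a + b)"
  have ds: "d \<noteq> 0" "s \<noteq> 0" using assms by (simp_all add: d_def s_def)
  define F where "F \<theta> = sin (d * \<theta>) / (2 * d) - sin (s * \<theta>) / (2 * s)" for \<theta>
  have "(F has_real_derivative (sin (real a * \<theta>) * sin (real b * \<theta>))) (at \<theta>)" for \<theta>
  proof -
    have "(F has_real_derivative (cos (d * \<theta>) * d / (2 * d) - cos (s * \<theta>) * s / (2 * s))) (at \<theta>)"
      unfolding F_def by (auto intro!: derivative_eq_intros)
    moreover have "cos (d * \<theta>) * d / (2 * d) - cos (s * \<theta>) * s / (2 * s) = sin (real a * \<theta>) * sin (real b * \<theta>)"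
    proof -
      have e: "d * \<theta> = real a * \<theta> - real b * \<theta>" "s * \<theta> = real a * \<theta> + real b * \<theta>"
        using assms by (simp_all add: d_def s_def of_nat_diff algebra_simps)
      show ?thesis using ds unfolding e cos_diff cos_add by (simp add: field_simps)
    qed
    ultimately show ?thesis by simp
  qed
  from fundamental_theorem_of_calculus_real[OF _ this, of 0 pi]
  show ?thesis using sin_npi[of "a + b"] sin_npi[of "a - b"] by (simp add: integral_unique F_def d_def s_def)
qed

lemma haar_cheb_U_orthonormal:
  assumes h: "is_haar_SU2 \<mu>"
  shows "haar_poly_mean \<mu> (cheb_U a * cheb_U b) = (if a = b then 1 else 0)"
proof -
  have "poly (cheb_U a * cheb_U b) (cos \<theta>) * sin \<theta> ^ 2
      = (poly (cheb_U a) (cos \<theta>) * sin \<theta>) * (poly (cheb_U b) (cos \<theta>) * sin \<theta>)" for \<theta>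
    by (simp add: power2_eq_square mult_ac)
  then have "poly (cheb_U a * cheb_U b) (cos \<theta>) * sin \<theta> ^ 2 = sin (real (Suc a) * \<theta>) * sin (real (Suc b) * \<theta>)"
    for \<theta>
    by (simp only: poly_cheb_U_cos)
  moreover have "integral {0..pi} (\<lambda>\<theta>. sin (real (Suc a) * \<theta>) * sin (real (Suc b) * \<theta>))
      = (if a = b then pi / 2 else 0)"
    using integral_sin_mult_sin_less[of "Suc a" "Suc b"] integral_sin_mult_sin_less[of "Suc b" "Suc a"]
      integral_sin_mult_sin_same[of "Suc a"]
    by (cases a b rule: linorder_cases) (simp_all add: mult.commute)
  ultimately show ?thesis unfolding haar_poly_mean_eq_integral[OF h] by simp
qed

definition dirichlet_poly :: "nat \<Rightarrow> real poly" where
  "dirichlet_poly N = (\<Sum>n\<le>N. smult (real (n + 1)) (cheb_U n))"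

lemma dirichlet_kernel_eq_poly:
  "y \<in> SU2 \<Longrightarrow> dirichlet_kernel N y = poly (dirichlet_poly N) (re11 y)"
  by (simp add: dirichlet_kernel_def dirichlet_poly_def poly_sum su2_char_eq_cheb_U)

lemma abs_dirichlet_poly_le:
  assumes "\<bar>t\<bar> \<le> 1"
  shows "\<bar>poly (dirichlet_poly N) t\<bar> \<le> (real N + 1) ^ 3"
proof -
  have "\<bar>poly (dirichlet_poly N) t\<bar> \<le> (\<Sum>n\<le>N. (real n + 1) * \<bar>poly (cheb_U n) t\<bar>)"
    unfolding dirichlet_poly_def poly_sum by (rule order.trans[OF sum_abs]) (simp add: abs_mult add.commute)
  also have "\<dots> \<le> (\<Sum>n\<le>N. (real N + 1) * (real N + 1))"
  proof (intro sum_mono mult_mono)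
    fix n assume "n \<in> {..N}"
    then show "\<bar>poly (cheb_U n) t\<bar> \<le> real N + 1"
      using abs_poly_cheb_U_le[OF assms, of n] by simp
  qed simp_all
  also have "\<dots> = (real N + 1) ^ 3" by (simp add: power3_eq_cube)
  finally show ?thesis .
qed

lemma haar_poly_mean_cheb_U_dirichlet:
  assumes "is_haar_SU2 \<mu>"
  shows "haar_poly_mean \<mu> (cheb_U k * dirichlet_poly N) = (if k \<le> N then real k + 1 else 0)"
proof -
  have "haar_poly_mean \<mu> (cheb_U k * dirichlet_poly N)
      = (\<Sum>n\<le>N. real (n + 1) * haar_poly_mean \<mu> (cheb_U k * cheb_U n))"
    by (simp add: dirichlet_poly_def sum_distrib_left haar_poly_mean_linear[OF assms] mult_smult_right)
  also have "\<dots> = (\<Sum>n\<le>N. if k = n then real k + 1 else 0)"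
    unfolding haar_cheb_U_orthonormal[OF assms] by (intro sum.cong) auto
  finally show ?thesis by simp
qed

lemma fourier_partial_sum_SU2:
  assumes "is_haar_SU2 \<mu>"
  shows "fourier_partial_sum \<mu> N g x = (\<integral>y. g (x ** conj_transpose y) * poly (dirichlet_poly N) (re11 y) \<partial>\<mu>)"
  unfolding fourier_partial_sum_def using haar_space[OF assms]
  by (intro Bochner_Integration.integral_cong) (simp_all add: matrix_inv_SU2 dirichlet_kernel_eq_poly)

section \<open>Bump functions\<close>

definition bump_poly :: "nat \<Rightarrow> real poly" where
  "bump_poly m = smult (1/8) (smult 3 (cheb_U (m+4)) - smult 3 (cheb_U (m+2)) - cheb_U (m+6) + cheb_U m)"

lemma sin_triple: "sin (3 * x) = 3 * sin x - 4 * sin x ^ 3" for x :: real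
proof -
  have "sin (3 * x) = sin (2 * x + x)" by simp
  also have "\<dots> = 2 * sin x * (cos x * cos x) + (1 - 2 * (sin x)\<^sup>2) * sin x"
    by (simp only: sin_add sin_double cos_double_sin mult.assoc)
  also have "\<dots> = 2 * sin x * (1 - sin x * sin x) + (1 - 2 * (sin x)\<^sup>2) * sin x"
  proof -
    have "cos x * cos x = 1 - sin x * sin x" using sin_cos_squared_add3[of x] by linarith
    then show ?thesis by (simp only:)
  qed
  also have "\<dots> = 3 * sin x - 4 * sin x ^ 3"
    by (simp add: power2_eq_square power3_eq_cube algebra_simps)
  finally show ?thesis .
qed

lemma poly_bump_poly_1: "poly (bump_poly m) 1 = 0"
  and poly_bump_poly_minus_1: "poly (bump_poly m) (-1) = 0"
  by (simp_all add: bump_poly_def poly_cheb_U_1 poly_cheb_U_minus_1 power_add algebra_simps)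

lemma poly_bump_poly_cos: "poly (bump_poly m) (cos \<theta>) = (sin \<theta>)\<^sup>2 * cos (real (m+4) * \<theta>)"
proof (cases "sin \<theta> = 0")
  case True
  then have "cos \<theta> = 1 \<or> cos \<theta> = -1" using sin_cos_squared_add2[of \<theta>] by (simp add: power2_eq_1_iff)
  then show ?thesis
    using True poly_bump_poly_1 poly_bump_poly_minus_1 by auto
next
  case False
  define x where "x = real (m+4) * \<theta>"
  have x: "real (Suc (m+4)) * \<theta> = x + \<theta>" "real (Suc (m+2)) * \<theta> = x - \<theta>"
     "real (Suc (m+6)) * \<theta> = x + 3 * \<theta>" "real (Suc m) * \<theta> = x - 3 * \<theta>"
    by (simp_all add: x_def algebra_simps)
  have "poly (bump_poly m) (cos \<theta>) * sin \<theta> = (1/8) * (3 * (poly (cheb_U (m+4)) (cos \<theta>) * sin \<theta>)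
     - 3 * (poly (cheb_U (m+2)) (cos \<theta>) * sin \<theta>) - poly (cheb_U (m+6)) (cos \<theta>) * sin \<theta>
     + poly (cheb_U m) (cos \<theta>) * sin \<theta>)"
    by (simp add: bump_poly_def algebra_simps)
  also have "\<dots> = (1/8) * (3 * sin (x + \<theta>) - 3 * sin (x - \<theta>) - sin (x + 3 * \<theta>) + sin (x - 3 * \<theta>))"
    unfolding poly_cheb_U_cos x ..
  also have "\<dots> = cos x * (3 * sin \<theta> - sin (3 * \<theta>)) / 4"
    unfolding sin_add sin_diff by (simp add: algebra_simps)
  also have "\<dots> = sin \<theta> ^ 3 * cos x" unfolding sin_triple by simp
  finally show ?thesis using False by (simp add: x_def power2_eq_square power3_eq_cube)
qed

lemma abs_poly_bump_poly_le:
  assumes "\<bar>t\<bar> \<le> 1"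
  shows "\<bar>poly (bump_poly m) t\<bar> \<le> 1"
proof -
  have "poly (bump_poly m) t = (sin (arccos t))\<^sup>2 * cos (real (m+4) * arccos t)"
    using poly_bump_poly_cos[of m "arccos t"] assms by (simp add: cos_arccos_abs)
  also have "\<bar>\<dots>\<bar> \<le> 1 * 1" unfolding abs_mult
    by (intro mult_mono) (simp_all add: abs_square_le_1 abs_sin_le_one abs_cos_le_one)
  finally show ?thesis by simp
qed

lemma abs_sin2_cos_mult_diff_le:
  fixes a b M :: real
  assumes "0 \<le> a" "a < b" "b \<le> pi" and M: "0 \<le> M"
  defines "F \<equiv> \<lambda>\<theta>. (sin \<theta>)\<^sup>2 * cos (M * \<theta>)"
  shows "\<bar>F b - F a\<bar> \<le> (M + 2) * \<bar>cos b - cos a\<bar>"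
proof -
  define Q where "Q c = 2 * cos c * cos (M * c) - M * sin c * sin (M * c)" for c
  have "DERIV F z :> sin z * Q z" for z
  proof -
    have "DERIV F z :> 2 * sin z * cos z * cos (M * z) + (sin z)\<^sup>2 * (- sin (M * z) * M)"
      unfolding F_def by (auto intro!: derivative_eq_intros simp: power2_eq_square)
    then show ?thesis by (simp add: Q_def power2_eq_square algebra_simps)
  qed
  \<comment> \<open>Cauchy's mean value theorem for \<open>F\<close> against \<open>cos\<close>, whose derivative \<open>- sin\<close> cancels\<close>
  then obtain c where c: "a < c" "c < b" "(F b - F a) * (- sin c) = (cos b - cos a) * (sin c * Q c)"
    using GMVT'[OF \<open>a < b\<close>, of F cos "\<lambda>z. - sin z" "\<lambda>z. sin z * Q z"]
    by (auto simp: F_def intro!: continuous_intros DERIV_cos)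
  have "sin c > 0" using c \<open>0 \<le> a\<close> \<open>b \<le> pi\<close> by (intro sin_gt_zero) simp_all
  moreover have "(F b - F a + (cos b - cos a) * Q c) * (- sin c) = 0" using c(3) by (simp add: algebra_simps)
  ultimately have "F b - F a + (cos b - cos a) * Q c = 0" by simp
  then have "F b - F a = - ((cos b - cos a) * Q c)" by linarith
  then have "\<bar>F b - F a\<bar> = \<bar>cos b - cos a\<bar> * \<bar>Q c\<bar>" by (simp add: abs_mult)
  also have "\<dots> \<le> \<bar>cos b - cos a\<bar> * (M + 2)"
  proof (intro mult_left_mono)
    have "\<bar>Q c\<bar> \<le> \<bar>2 * cos c * cos (M * c)\<bar> + \<bar>M * sin c * sin (M * c)\<bar>"
      unfolding Q_def by (rule abs_triangle_ineq4)
    also have "\<bar>2 * cos c * cos (M * c)\<bar> \<le> 2" unfolding abs_mult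
      using abs_cos_le_one[of c] abs_cos_le_one[of "M * c"] by (simp add: mult_le_one)
    also have "\<bar>M * sin c * sin (M * c)\<bar> \<le> M"
      using M mult_left_le[OF mult_le_one[OF abs_sin_le_one _ abs_sin_le_one] M, of c "M * c"]
      by (simp add: abs_mult mult_ac)
    finally show "\<bar>Q c\<bar> \<le> M + 2" by simp
  qed simp
  finally show ?thesis by (simp add: mult.commute)
qed

lemma poly_bump_poly_lipschitz:
  assumes "\<bar>s\<bar> \<le> 1" "\<bar>t\<bar> \<le> 1"
  shows "\<bar>poly (bump_poly m) s - poly (bump_poly m) t\<bar> \<le> (real m + 6) * \<bar>s - t\<bar>"
proof -
  define F where "F \<theta> = (sin \<theta>)\<^sup>2 * cos (real (m+4) * \<theta>)" for \<theta>
  have F: "\<bar>F b - F a\<bar> \<le> (real m + 6) * \<bar>cos b - cos a\<bar>" if "0 \<le> a" "a \<le> b" "b \<le> pi" for a b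
    using abs_sin2_cos_mult_diff_le[of a b "real (m+4)"] that unfolding F_def
    by (cases "a = b") (simp_all add: add.commute)
  have "poly (bump_poly m) u = F (arccos u)" if "\<bar>u\<bar> \<le> 1" for u
    using poly_bump_poly_cos[of m "arccos u"] that by (simp add: cos_arccos_abs F_def)
  moreover have "\<bar>F (arccos s) - F (arccos t)\<bar> \<le> (real m + 6) * \<bar>cos (arccos s) - cos (arccos t)\<bar>"
    using F[of "arccos s" "arccos t"] F[of "arccos t" "arccos s"] assms
    by (cases "arccos s \<le> arccos t")
      (auto simp: arccos_lbound arccos_ubound abs_minus_commute)
  ultimately show ?thesis using assms by (simp add: cos_arccos_abs)
qed

lemma le_powr_of_le_min:
  fixes x L \<delta> \<alpha> :: real
  assumes "0 < \<alpha>" "\<alpha> \<le> 1" "1 \<le> L" "0 \<le> \<delta>" "x \<le> 2" "x \<le> L * \<delta>"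
  shows "x \<le> 2 * L powr \<alpha> * \<delta> powr \<alpha>"
proof -
  have "x \<le> 2 * (L * \<delta>) powr \<alpha>"
  proof (cases "1 \<le> L * \<delta>")
    case True
    then show ?thesis using assms ge_one_powr_ge_zero[of "L * \<delta>" \<alpha>] by linarith
  next
    case False
    have "L * \<delta> = (L * \<delta>) powr 1" using assms by simp
    also have "\<dots> \<le> (L * \<delta>) powr \<alpha>" using False assms by (intro powr_mono') simp_all
    finally have "L * \<delta> \<le> (L * \<delta>) powr \<alpha>" .
    then show ?thesis using assms powr_ge_zero[of "L * \<delta>" \<alpha>] by linarith
  qed
  then show ?thesis using assms by (simp add: powr_mult mult.assoc)
qed

lemma haar_poly_mean_bump_dirichlet:
  assumes "is_haar_SU2 \<mu>"
  shows "haar_poly_mean \<mu> (bump_poly m * dirichlet_poly (m+3)) = - (real m + 4) / 4"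
  \<comment> \<open>only the components \<open>cheb_U m\<close> and \<open>cheb_U (m+2)\<close> of the bump survive the truncation at \<open>m+3\<close>\<close>
proof -
  have "bump_poly m * dirichlet_poly (m+3) = smult (1/8) (smult 3 (cheb_U (m+4) * dirichlet_poly (m+3))
      - smult 3 (cheb_U (m+2) * dirichlet_poly (m+3)) - cheb_U (m+6) * dirichlet_poly (m+3)
      + cheb_U m * dirichlet_poly (m+3))"
    by (simp add: bump_poly_def ring_distribs)
  then show ?thesis
    by (simp add: haar_poly_mean_linear[OF assms] haar_poly_mean_cheb_U_dirichlet[OF assms])
qed

definition bump :: "real \<Rightarrow> cmat2 \<Rightarrow> nat \<Rightarrow> cmat2 \<Rightarrow> real" where
  "bump \<alpha> x m z = poly (bump_poly m) (re11 (conj_transpose x ** z)) / (2 * (real m + 6) powr \<alpha>)"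

lemma continuous_on_bump [continuous_intros]:
  "continuous_on S f \<Longrightarrow> continuous_on S (\<lambda>z. bump \<alpha> x m (f z))"
  unfolding bump_def by (intro continuous_intros) auto

lemma bump_denominator_ge: "0 < \<alpha> \<Longrightarrow> 2 \<le> 2 * (real m + 6) powr \<alpha>"
  using ge_one_powr_ge_zero[of "real m + 6" \<alpha>] by simp

lemma abs_re11_translate_le_1: "x \<in> SU2 \<Longrightarrow> z \<in> SU2 \<Longrightarrow> \<bar>re11 (conj_transpose x ** z)\<bar> \<le> 1"
  by (intro abs_re11_le_1 SU2_mult_closed conj_transpose_in_SU2)

lemma abs_bump_le:
  assumes "x \<in> SU2" "z \<in> SU2" "0 < \<alpha>"
  shows "\<bar>bump \<alpha> x m z\<bar> \<le> 1/2"
proof -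
  have "\<bar>poly (bump_poly m) (re11 (conj_transpose x ** z))\<bar> \<le> 1"
    by (intro abs_poly_bump_poly_le abs_re11_translate_le_1 assms)
  then show ?thesis
    using bump_denominator_ge[OF assms(3), of m] by (simp add: bump_def abs_divide frac_le)
qed

lemma bump_holder:
  assumes "x \<in> SU2" "a \<in> SU2" "b \<in> SU2" "0 < \<alpha>" "\<alpha> \<le> 1"
  shows "\<bar>bump \<alpha> x m a - bump \<alpha> x m b\<bar> \<le> su2_dist a b powr \<alpha>"
proof -
  define s t where "s = re11 (conj_transpose x ** a)" and "t = re11 (conj_transpose x ** b)"
  define C where "C = 2 * (real m + 6) powr \<alpha>"
  have st: "\<bar>s\<bar> \<le> 1" "\<bar>t\<bar> \<le> 1" unfolding s_def t_def by (intro abs_re11_translate_le_1 assms)+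
  \<comment> \<open>the bump polynomial is bounded by 1 and \<open>(m + 6)\<close>-Lipschitz on \<open>[-1, 1]\<close>\<close>
  have "\<bar>poly (bump_poly m) s - poly (bump_poly m) t\<bar> \<le> 2 * (real m + 6) powr \<alpha> * \<bar>s - t\<bar> powr \<alpha>"
    using abs_poly_bump_poly_le[OF st(1), of m] abs_poly_bump_poly_le[OF st(2), of m]
    by (intro le_powr_of_le_min poly_bump_poly_lipschitz st assms) auto
  also have "\<dots> \<le> C * su2_dist a b powr \<alpha>"
    unfolding C_def s_def t_def using assms
    by (intro mult_left_mono powr_mono2 abs_re11_translate_diff_le) simp_all
  finally show ?thesis
    using bump_denominator_ge[OF assms(4), of m]
    by (simp add: bump_def C_def s_def t_def abs_divide pos_divide_le_eq mult.commute
        flip: diff_divide_distrib)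
qed

lemma fourier_partial_sum_bump_centre:
  assumes "is_haar_SU2 \<mu>" "x \<in> SU2"
  shows "fourier_partial_sum \<mu> (m+3) (bump \<alpha> x m) x = - (real m + 4) / (8 * (real m + 6) powr \<alpha>)"
proof -
  have "fourier_partial_sum \<mu> (m+3) (bump \<alpha> x m) x
      = (\<integral>y. poly (bump_poly m * dirichlet_poly (m+3)) (re11 y) / (2 * (real m + 6) powr \<alpha>) \<partial>\<mu>)"
    unfolding fourier_partial_sum_SU2[OF assms(1)] using assms(2)
    by (simp add: bump_def SU2_conj_transpose_mult_cancel)
  also have "\<dots> = haar_poly_mean \<mu> (bump_poly m * dirichlet_poly (m+3)) / (2 * (real m + 6) powr \<alpha>)"
    by (simp add: haar_poly_mean_def)
  finally show ?thesis by (simp add: haar_poly_mean_bump_dirichlet[OF assms(1)])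
qed

lemma abs_fourier_partial_sum_bump_le:
  assumes "is_haar_SU2 \<mu>" "x \<in> SU2" "p \<in> SU2" "0 < \<alpha>"
  shows "\<bar>fourier_partial_sum \<mu> N (bump \<alpha> x m) p\<bar> \<le> (real N + 1) ^ 3 / 2"
  unfolding fourier_partial_sum_SU2[OF assms(1)]
proof (rule haar_integral_abs_le[OF assms(1)])
  show "continuous_on SU2 (\<lambda>y. bump \<alpha> x m (p ** conj_transpose y) * poly (dirichlet_poly N) (re11 y))"
    by (intro continuous_intros)
  fix y assume "y \<in> SU2"
  then have "\<bar>bump \<alpha> x m (p ** conj_transpose y)\<bar> * \<bar>poly (dirichlet_poly N) (re11 y)\<bar> \<le> 1/2 * (real N + 1) ^ 3"
    using assms by (intro mult_mono abs_bump_le abs_dirichlet_poly_le abs_re11_le_1 SU2_mult_closed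
        conj_transpose_in_SU2) simp_all
  then show "\<bar>bump \<alpha> x m (p ** conj_transpose y) * poly (dirichlet_poly N) (re11 y)\<bar> \<le> (real N + 1) ^ 3 / 2"
    by (simp add: abs_mult)
qed

locale bump_series =
  fixes \<alpha> :: real and \<mu> :: "cmat2 measure"
    and c \<epsilon> :: "nat \<Rightarrow> real" and centre :: "nat \<Rightarrow> cmat2" and deg :: "nat \<Rightarrow> nat"
  assumes alpha: "0 < \<alpha>" "\<alpha> < 1" and haar: "is_haar_SU2 \<mu>" and centre: "\<And>i. centre i \<in> SU2"
    and abs_c_le: "\<And>i. \<bar>c i\<bar> \<le> 1" and eps_nonneg: "\<And>i. 0 \<le> \<epsilon> i" and summable_eps: "summable \<epsilon>"
begin

definition bump_sum :: "cmat2 \<Rightarrow> real" where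
  "bump_sum z = (\<Sum>i. c i * \<epsilon> i * bump \<alpha> (centre i) (deg i) z)"

lemma abs_bump_term_le:
  assumes "z \<in> SU2"
  shows "\<bar>c i * \<epsilon> i * bump \<alpha> (centre i) (deg i) z\<bar> \<le> \<epsilon> i"
proof -
  have "\<bar>c i\<bar> * \<bar>bump \<alpha> (centre i) (deg i) z\<bar> \<le> 1"
    using abs_c_le[of i] abs_bump_le[OF centre assms alpha(1), of i "deg i"] by (intro mult_le_one) auto
  then have "\<epsilon> i * (\<bar>c i\<bar> * \<bar>bump \<alpha> (centre i) (deg i) z\<bar>) \<le> \<epsilon> i"
    using eps_nonneg by (rule mult_left_le)
  then show ?thesis using eps_nonneg[of i] by (simp add: abs_mult mult_ac)
qed

lemma summable_bump_terms: "z \<in> SU2 \<Longrightarrow> summable (\<lambda>i. c i * \<epsilon> i * bump \<alpha> (centre i) (deg i) z)"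
  by (rule summable_comparison_test[OF _ summable_eps]) (use abs_bump_term_le in auto)

lemma bump_sum_holder:
  assumes "x \<in> SU2" "y \<in> SU2"
  shows "\<bar>bump_sum x - bump_sum y\<bar> \<le> suminf \<epsilon> * su2_dist x y powr \<alpha>"
proof -
  have "bump_sum x - bump_sum y
      = (\<Sum>i. c i * \<epsilon> i * (bump \<alpha> (centre i) (deg i) x - bump \<alpha> (centre i) (deg i) y))"
    unfolding bump_sum_def right_diff_distrib
    by (rule suminf_diff) (intro summable_bump_terms assms)+
  also have "\<bar>\<dots>\<bar> \<le> (\<Sum>i. \<epsilon> i * su2_dist x y powr \<alpha>)"
  proof (rule norm_suminf_le[where
        f="\<lambda>i. c i * \<epsilon> i * (bump \<alpha> (centre i) (deg i) x - bump \<alpha> (centre i) (deg i) y)",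
        unfolded real_norm_def])
    fix i
    show "\<bar>c i * \<epsilon> i * (bump \<alpha> (centre i) (deg i) x - bump \<alpha> (centre i) (deg i) y)\<bar>
        \<le> \<epsilon> i * su2_dist x y powr \<alpha>"
    proof -
      have "\<bar>c i\<bar> * \<bar>bump \<alpha> (centre i) (deg i) x - bump \<alpha> (centre i) (deg i) y\<bar> \<le> 1 * su2_dist x y powr \<alpha>"
        using bump_holder[OF centre assms alpha(1) less_imp_le[OF alpha(2)], of i "deg i"] abs_c_le[of i]
        by (intro mult_mono) auto
      then have "\<epsilon> i * (\<bar>c i\<bar> * \<bar>bump \<alpha> (centre i) (deg i) x - bump \<alpha> (centre i) (deg i) y\<bar>)
          \<le> \<epsilon> i * su2_dist x y powr \<alpha>"
        using eps_nonneg[of i] by (intro mult_left_mono) simp_all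
      then show ?thesis using eps_nonneg[of i] by (simp add: abs_mult mult_ac)
    qed
  qed (rule summable_mult2[OF summable_eps])
  also have "\<dots> = suminf \<epsilon> * su2_dist x y powr \<alpha>" by (rule suminf_mult2[OF summable_eps, symmetric])
  finally show ?thesis .
qed

lemma Lip_alpha_bump_sum: "Lip_alpha \<alpha> bump_sum"
  unfolding Lip_alpha_def using bump_sum_holder summable_eps eps_nonneg
  by (intro exI[of _ "suminf \<epsilon>"]) (auto intro: suminf_nonneg)

lemma fourier_partial_sum_bump_sum:
  assumes p: "p \<in> SU2"
  shows "(\<lambda>i. c i * \<epsilon> i * fourier_partial_sum \<mu> N (bump \<alpha> (centre i) (deg i)) p)
    sums fourier_partial_sum \<mu> N bump_sum p"
proof -
  define F where "F i y = c i * \<epsilon> i * (bump \<alpha> (centre i) (deg i) (p ** conj_transpose y)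
    * poly (dirichlet_poly N) (re11 y))" for i y
  have F_cont: "continuous_on SU2 (F i)" for i unfolding F_def by (intro continuous_intros)
  have F_le: "\<bar>F i y\<bar> \<le> \<epsilon> i * (real N + 1) ^ 3" if y: "y \<in> SU2" for i y
    unfolding F_def abs_mult mult.assoc[symmetric]
    using abs_bump_term_le[OF SU2_mult_closed[OF p conj_transpose_in_SU2[OF y]], of i]
      abs_dirichlet_poly_le[OF abs_re11_le_1[OF y], of N]
    by (intro mult_mono) (simp_all add: abs_mult eps_nonneg)
  have summable_bound: "summable (\<lambda>i. \<epsilon> i * (real N + 1) ^ 3)"
    by (rule summable_mult2[OF summable_eps])
  have "(\<lambda>i. integral\<^sup>L \<mu> (F i)) sums (\<integral>y. (\<Sum>i. F i y) \<partial>\<mu>)"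
  proof (rule sums_integral)
    show "integrable \<mu> (F i)" for i by (rule haar_integrable_continuous[OF haar F_cont])
    show "AE y in \<mu>. summable (\<lambda>i. norm (F i y))"
      using haar_space[OF haar] F_le
      by (intro AE_I2 summable_comparison_test[OF _ summable_bound]) auto
    show "summable (\<lambda>i. \<integral>y. norm (F i y) \<partial>\<mu>)"
    proof (rule summable_comparison_test[OF _ summable_bound])
      have "\<bar>\<integral>y. \<bar>F i y\<bar> \<partial>\<mu>\<bar> \<le> \<epsilon> i * (real N + 1) ^ 3" for i
        using F_le by (intro haar_integral_abs_le[OF haar] continuous_intros F_cont) auto
      then show "\<exists>N0. \<forall>n\<ge>N0. norm (\<integral>y. norm (F n y) \<partial>\<mu>) \<le> \<epsilon> n * (real N + 1) ^ 3"
        by auto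
    qed
  qed
  moreover have "(\<integral>y. (\<Sum>i. F i y) \<partial>\<mu>) = fourier_partial_sum \<mu> N bump_sum p"
    unfolding fourier_partial_sum_SU2[OF haar]
  proof (rule Bochner_Integration.integral_cong[OF refl])
    fix y assume "y \<in> space \<mu>"
    then have "p ** conj_transpose y \<in> SU2"
      using haar_space[OF haar] p by (simp add: SU2_mult_closed conj_transpose_in_SU2)
    from suminf_mult2[OF summable_bump_terms[OF this], of "poly (dirichlet_poly N) (re11 y)"]
    show "(\<Sum>i. F i y) = bump_sum (p ** conj_transpose y) * poly (dirichlet_poly N) (re11 y)"
      by (simp add: F_def bump_sum_def mult.assoc)
  qed
  moreover have "integral\<^sup>L \<mu> (F i) = c i * \<epsilon> i * fourier_partial_sum \<mu> N (bump \<alpha> (centre i) (deg i)) p" for i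
    unfolding F_def fourier_partial_sum_SU2[OF haar] by simp
  ultimately show ?thesis by simp
qed

lemma abs_fourier_partial_sum_tail_le:
  assumes p: "p \<in> SU2" and small: "\<And>i. j < i \<Longrightarrow> \<epsilon> i * (real N + 1) ^ 3 \<le> (1/2) ^ i"
  shows "\<bar>\<Sum>n. c (n + Suc j) * \<epsilon> (n + Suc j) *
      fourier_partial_sum \<mu> N (bump \<alpha> (centre (n + Suc j)) (deg (n + Suc j))) p\<bar> \<le> 1"
proof -
  define a where "a i = c i * \<epsilon> i * fourier_partial_sum \<mu> N (bump \<alpha> (centre i) (deg i)) p" for i
  have "\<bar>a (n + Suc j)\<bar> \<le> (1/2) ^ Suc n" for n
  proof -
    define i where "i = n + Suc j"
    have "\<bar>c i\<bar> * \<bar>fourier_partial_sum \<mu> N (bump \<alpha> (centre i) (deg i)) p\<bar> \<le> 1 * (real N + 1) ^ 3"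
      using abs_c_le[of i] abs_fourier_partial_sum_bump_le[OF haar centre[of i] p alpha(1), where N=N and m="deg i"]
      by (intro mult_mono) auto
    then have "\<epsilon> i * (\<bar>c i\<bar> * \<bar>fourier_partial_sum \<mu> N (bump \<alpha> (centre i) (deg i)) p\<bar>)
        \<le> \<epsilon> i * (real N + 1) ^ 3"
      using eps_nonneg[of i] by (intro mult_left_mono) simp_all
    also have "\<dots> \<le> (1/2) ^ i" by (intro small) (simp add: i_def)
    also have "\<dots> \<le> (1/2) ^ Suc n" by (intro power_decreasing) (simp_all add: i_def)
    finally show ?thesis using eps_nonneg[of i] by (simp add: a_def i_def abs_mult mult_ac)
  qed
  then have "\<bar>\<Sum>n. a (n + Suc j)\<bar> \<le> (\<Sum>n. (1/2) ^ Suc n)"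
    using power_half_series
    by (intro norm_suminf_le[where f="\<lambda>n. a (n + Suc j)", unfolded real_norm_def] sums_summable) auto
  also have "(\<Sum>n. (1/2::real) ^ Suc n) = 1" using power_half_series by (rule sums_unique[symmetric])
  finally show ?thesis by (simp add: a_def)
qed

end

section \<open>The gliding hump\<close>

lemma abs_add_sign_mult_ge:
  fixes A V e :: real
  assumes e: "0 \<le> e"
  shows "e * \<bar>V\<bar> \<le> \<bar>A + (if 0 \<le> A * V then 1 else -1) * e * V\<bar>"
proof (cases "0 \<le> A * V")
  case True
  then consider "0 \<le> A" "0 \<le> V" | "A \<le> 0" "V \<le> 0" by (auto simp: zero_le_mult_iff)
  then show ?thesis
  proof cases
    case 1
    then show ?thesis using True e by (simp add: abs_of_nonneg)
  next
    case 2
    then have "e * V \<le> 0" using e by (simp add: mult_nonneg_nonpos)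
    then show ?thesis using True 2 by (simp add: abs_of_nonpos)
  qed
next
  case False
  then consider "0 < A" "V < 0" | "A < 0" "0 < V" by (auto simp: zero_le_mult_iff)
  then show ?thesis
  proof cases
    case 1
    then have "e * V \<le> 0" using e by (simp add: mult_nonneg_nonpos)
    then show ?thesis using False 1 by (simp add: abs_of_nonneg abs_of_neg)
  next
    case 2
    then show ?thesis using False e by (simp add: abs_of_nonpos abs_of_pos)
  qed
qed

(* The peak (m + 4) / (8 (m + 6) powr alpha) of the j-th bump is at least (m + 6) powr (1 - alpha) / 16,
   so this degree makes its weighted peak exceed j + 2. *)
definition degree_needed :: "real \<Rightarrow> nat \<Rightarrow> nat \<Rightarrow> nat" where
  "degree_needed \<alpha> j N = nat \<lceil>(16 * ((real j + 2) * 2 ^ j * (real N + 1) ^ 3)) powr (1 / (1 - \<alpha>))\<rceil>"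

primrec hump_degree :: "real \<Rightarrow> nat \<Rightarrow> nat" where
  "hump_degree \<alpha> 0 = degree_needed \<alpha> 0 0"
| "hump_degree \<alpha> (Suc j) = max (hump_degree \<alpha> j) (degree_needed \<alpha> (Suc j) (hump_degree \<alpha> j + 3))"

definition hump_prev_order :: "real \<Rightarrow> nat \<Rightarrow> nat" where
  "hump_prev_order \<alpha> j = (case j of 0 \<Rightarrow> 0 | Suc i \<Rightarrow> hump_degree \<alpha> i + 3)"

(* (N + 1)^3 bounds the Dirichlet kernel of order N, so the i-th bump changes each earlier
   partial sum by at most 2^-i. *)
definition hump_weight :: "real \<Rightarrow> nat \<Rightarrow> real" where
  "hump_weight \<alpha> j = (1/2) ^ j / (real (hump_prev_order \<alpha> j) + 1) ^ 3"

lemma degree_needed_le_hump_degree: "degree_needed \<alpha> j (hump_prev_order \<alpha> j) \<le> hump_degree \<alpha> j"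
  by (cases j) (simp_all add: hump_prev_order_def)

lemma hump_degree_mono: "i \<le> j \<Longrightarrow> hump_degree \<alpha> i \<le> hump_degree \<alpha> j"
  by (rule lift_Suc_mono_le[of "hump_degree \<alpha>"]) simp_all

lemma hump_prev_order_ge: "j < i \<Longrightarrow> hump_degree \<alpha> j + 3 \<le> hump_prev_order \<alpha> i"
  by (cases i) (auto simp: hump_prev_order_def intro!: hump_degree_mono)

lemma hump_weight_pos: "0 < hump_weight \<alpha> j"
  by (simp add: hump_weight_def)

lemma summable_hump_weight: "summable (hump_weight \<alpha>)"
proof (rule summable_comparison_test[OF _ summable_geometric[of "1/2"]])
  have "hump_weight \<alpha> j \<le> (1/2) ^ j" for j
  proof -
    have "(1/2) ^ j / (real (hump_prev_order \<alpha> j) + 1) ^ 3 \<le> (1/2) ^ j / 1"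
      by (intro divide_left_mono) simp_all
    then show ?thesis by (simp add: hump_weight_def)
  qed
  then show "\<exists>N. \<forall>n\<ge>N. norm (hump_weight \<alpha> n) \<le> (1/2) ^ n"
    using hump_weight_pos by (auto simp: less_imp_le)
qed simp

lemma hump_weight_tail:
  assumes "j < i"
  shows "hump_weight \<alpha> i * (real (hump_degree \<alpha> j + 3) + 1) ^ 3 \<le> (1/2) ^ i"
proof -
  have "real (hump_degree \<alpha> j + 3) \<le> real (hump_prev_order \<alpha> i)"
    using hump_prev_order_ge[OF assms, of \<alpha>] by (simp only: of_nat_le_iff)
  then have "(real (hump_degree \<alpha> j + 3) + 1) ^ 3 \<le> (real (hump_prev_order \<alpha> i) + 1) ^ 3"
    by (intro power_mono) simp_all
  then have "(real (hump_degree \<alpha> j + 3) + 1) ^ 3 / (real (hump_prev_order \<alpha> i) + 1) ^ 3 \<le> 1"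
    by simp
  then have "(1/2) ^ i * ((real (hump_degree \<alpha> j + 3) + 1) ^ 3 / (real (hump_prev_order \<alpha> i) + 1) ^ 3)
      \<le> (1/2) ^ i * 1"
    by (intro mult_left_mono) simp_all
  then show ?thesis by (simp add: hump_weight_def)
qed

lemma hump_weight_mult_peak_ge:
  fixes \<alpha> :: real and j :: nat
  assumes "0 < \<alpha>" "\<alpha> < 1"
  defines "m \<equiv> hump_degree \<alpha> j"
  shows "real j + 2 \<le> hump_weight \<alpha> j * ((real m + 4) / (8 * (real m + 6) powr \<alpha>))"
proof -
  define K where "K = (real (hump_prev_order \<alpha> j) + 1) ^ 3"
  define T where "T = (real j + 2) * 2 ^ j * K"
  define x where "x = real m + 6"
  have T: "0 < T" and x: "0 < x" by (simp_all add: T_def K_def x_def)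
  have "(16 * T) powr (1 / (1 - \<alpha>)) \<le> real (degree_needed \<alpha> j (hump_prev_order \<alpha> j))"
    unfolding degree_needed_def T_def K_def by (simp add: real_nat_ceiling_ge)
  also have "\<dots> \<le> x" using degree_needed_le_hump_degree[of \<alpha> j] by (simp add: x_def m_def)
  finally have "(16 * T) powr (1 / (1 - \<alpha>)) \<le> x" .
  then have "((16 * T) powr (1 / (1 - \<alpha>))) powr (1 - \<alpha>) \<le> x powr (1 - \<alpha>)"
    using assms by (intro powr_mono2) simp_all
  then have "16 * T \<le> x powr (1 - \<alpha>)" using T assms by (simp add: powr_powr)
  also have "\<dots> = x / x powr \<alpha>" using x by (simp add: powr_diff)
  finally have "T \<le> x / (16 * x powr \<alpha>)" using x by (simp add: field_simps)
  also have "\<dots> \<le> (real m + 4) / (8 * (real m + 6) powr \<alpha>)"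
    using x by (simp add: x_def field_simps)
  finally have "hump_weight \<alpha> j * T \<le> hump_weight \<alpha> j * ((real m + 4) / (8 * (real m + 6) powr \<alpha>))"
    using hump_weight_pos[of \<alpha> j] by (intro mult_left_mono) simp_all
  moreover have "hump_weight \<alpha> j * T = real j + 2"
    by (simp add: hump_weight_def T_def K_def power_one_over)
  ultimately show ?thesis by simp
qed

definition hump_head :: "cmat2 measure \<Rightarrow> real \<Rightarrow> (nat \<Rightarrow> cmat2) \<Rightarrow> (nat \<Rightarrow> real) \<Rightarrow> nat \<Rightarrow> real" where
  "hump_head \<mu> \<alpha> x c j = (\<Sum>i<j. c i * hump_weight \<alpha> i *
     fourier_partial_sum \<mu> (hump_degree \<alpha> j + 3) (bump \<alpha> (x i) (hump_degree \<alpha> i)) (x j))"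

definition hump_peak :: "cmat2 measure \<Rightarrow> real \<Rightarrow> (nat \<Rightarrow> cmat2) \<Rightarrow> nat \<Rightarrow> real" where
  "hump_peak \<mu> \<alpha> x j = fourier_partial_sum \<mu> (hump_degree \<alpha> j + 3) (bump \<alpha> (x j) (hump_degree \<alpha> j)) (x j)"

primrec hump_signs_upto :: "cmat2 measure \<Rightarrow> real \<Rightarrow> (nat \<Rightarrow> cmat2) \<Rightarrow> nat \<Rightarrow> nat \<Rightarrow> real" where
  "hump_signs_upto \<mu> \<alpha> x 0 = (\<lambda>_. 0)"
| "hump_signs_upto \<mu> \<alpha> x (Suc j) = (hump_signs_upto \<mu> \<alpha> x j)
    (j := (if 0 \<le> hump_head \<mu> \<alpha> x (hump_signs_upto \<mu> \<alpha> x j) j * hump_peak \<mu> \<alpha> x j then 1 else -1))"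

definition hump_sign :: "cmat2 measure \<Rightarrow> real \<Rightarrow> (nat \<Rightarrow> cmat2) \<Rightarrow> nat \<Rightarrow> real" where
  "hump_sign \<mu> \<alpha> x j = hump_signs_upto \<mu> \<alpha> x (Suc j) j"

lemma hump_signs_upto_eq: "i < j \<Longrightarrow> hump_signs_upto \<mu> \<alpha> x j i = hump_sign \<mu> \<alpha> x i"
  by (induction j) (auto simp: hump_sign_def less_Suc_eq)

lemma abs_hump_sign: "\<bar>hump_sign \<mu> \<alpha> x j\<bar> = 1"
  by (simp add: hump_sign_def)

lemma hump_sign_eq:
  "hump_sign \<mu> \<alpha> x j
    = (if 0 \<le> hump_head \<mu> \<alpha> x (hump_sign \<mu> \<alpha> x) j * hump_peak \<mu> \<alpha> x j then 1 else -1)"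
proof -
  have "hump_head \<mu> \<alpha> x (hump_signs_upto \<mu> \<alpha> x j) j = hump_head \<mu> \<alpha> x (hump_sign \<mu> \<alpha> x) j"
    unfolding hump_head_def by (intro sum.cong) (simp_all add: hump_signs_upto_eq)
  then show ?thesis by (simp add: hump_sign_def)
qed

lemma bump_series_hump:
  assumes "0 < \<alpha>" "\<alpha> < 1" "is_haar_SU2 \<mu>" "\<And>j. x j \<in> SU2"
  shows "bump_series \<alpha> \<mu> (hump_sign \<mu> \<alpha> x) (hump_weight \<alpha>) x"
  using assms by unfold_locales (simp_all add: abs_hump_sign summable_hump_weight less_imp_le[OF hump_weight_pos])

lemma abs_fourier_partial_sum_hump_ge:
  assumes \<alpha>: "0 < \<alpha>" "\<alpha> < 1" and h: "is_haar_SU2 \<mu>" and x: "\<And>j. x j \<in> SU2"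
  shows "real j + 1 \<le> \<bar>fourier_partial_sum \<mu> (hump_degree \<alpha> j + 3)
    (bump_series.bump_sum \<alpha> (hump_sign \<mu> \<alpha> x) (hump_weight \<alpha>) x (hump_degree \<alpha>)) (x j)\<bar>"
proof -
  interpret bump_series \<alpha> \<mu> "hump_sign \<mu> \<alpha> x" "hump_weight \<alpha>" x "hump_degree \<alpha>"
    by (rule bump_series_hump[OF assms])
  define N where "N = hump_degree \<alpha> j + 3"
  define a where "a i = hump_sign \<mu> \<alpha> x i * hump_weight \<alpha> i * fourier_partial_sum \<mu> N
    (bump \<alpha> (x i) (hump_degree \<alpha> i)) (x j)" for i
  have sums: "a sums fourier_partial_sum \<mu> N bump_sum (x j)"
    unfolding a_def by (rule fourier_partial_sum_bump_sum[OF x])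
  have sum: "fourier_partial_sum \<mu> N bump_sum (x j) = (\<Sum>n. a (n + Suc j)) + (\<Sum>i<Suc j. a i)"
    unfolding sums_unique[OF sums] by (rule suminf_split_initial_segment[OF sums_summable[OF sums]])
  \<comment> \<open>the humps before the \<open>j\<close>-th cannot cancel it, by the choice of its sign\<close>
  have "\<bar>hump_peak \<mu> \<alpha> x j\<bar> = (real (hump_degree \<alpha> j) + 4) / (8 * (real (hump_degree \<alpha> j) + 6) powr \<alpha>)"
    unfolding hump_peak_def fourier_partial_sum_bump_centre[OF h x] by (simp add: abs_divide)
  then have "real j + 2 \<le> hump_weight \<alpha> j * \<bar>hump_peak \<mu> \<alpha> x j\<bar>"
    using hump_weight_mult_peak_ge[OF \<alpha>, of j] by simp
  also have "\<dots> \<le> \<bar>\<Sum>i<Suc j. a i\<bar>"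
  proof -
    have "(\<Sum>i<Suc j. a i)
        = hump_head \<mu> \<alpha> x (hump_sign \<mu> \<alpha> x) j + hump_sign \<mu> \<alpha> x j * hump_weight \<alpha> j * hump_peak \<mu> \<alpha> x j"
      by (simp add: a_def N_def hump_head_def hump_peak_def)
    then show ?thesis
      using abs_add_sign_mult_ge[OF less_imp_le[OF hump_weight_pos],
          of \<alpha> j "hump_peak \<mu> \<alpha> x j" "hump_head \<mu> \<alpha> x (hump_sign \<mu> \<alpha> x) j"]
      by (simp only: hump_sign_eq[of \<mu> \<alpha> x j])
  qed
  finally have head: "real j + 2 \<le> \<bar>\<Sum>i<Suc j. a i\<bar>" .
  have tail: "\<bar>\<Sum>n. a (n + Suc j)\<bar> \<le> 1"
    unfolding a_def N_def using hump_weight_tail[of j _ \<alpha>]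
    by (intro abs_fourier_partial_sum_tail_le x) (simp add: add.commute)
  show ?thesis using head tail by (simp add: sum flip: N_def)
qed

lemma not_bdd_above_atLeast_1:
  fixes g :: "nat \<Rightarrow> real"
  assumes "\<And>k. \<exists>N\<ge>1. real k \<le> g N"
  shows "\<not> bdd_above (g ` {1..})"
proof
  assume "bdd_above (g ` {1..})"
  then obtain B where B: "\<And>N. 1 \<le> N \<Longrightarrow> g N \<le> B" by (auto simp: bdd_above_def)
  obtain N where "1 \<le> N" "real (nat \<lceil>B\<rceil> + 1) \<le> g N" using assms by blast
  then show False using B[of N] real_nat_ceiling_ge[of B] by linarith
qed

lemma countable_enumeration_infinitely_often:
  assumes "countable X" "X \<noteq> {}"
  shows "\<exists>e :: nat \<Rightarrow> 'a. range e \<subseteq> X \<and> (\<forall>x\<in>X. \<forall>k. \<exists>j\<ge>k. e j = x)"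
proof -
  define e where "e j = from_nat_into X (fst (prod_decode j))" for j
  have "\<exists>j\<ge>k. e j = x" if x: "x \<in> X" for x k
  proof -
    obtain i where "x = from_nat_into X i" using from_nat_into_surj[OF assms(1) x] by metis
    then show ?thesis by (intro exI[of _ "prod_encode (i, k)"]) (simp add: e_def le_prod_encode_2)
  qed
  moreover have "range e \<subseteq> X" unfolding e_def using from_nat_into[OF assms(2)] by blast
  ultimately show ?thesis by blast
qed

lemma Lip_alpha_with_growing_partial_sums:
  assumes "0 < \<alpha>" "\<alpha> < 1" "is_haar_SU2 \<mu>" "\<And>j. x j \<in> SU2"
  shows "\<exists>f. Lip_alpha \<alpha> f \<and>
    (\<forall>j. real j + 1 \<le> \<bar>fourier_partial_sum \<mu> (hump_degree \<alpha> j + 3) f (x j)\<bar>)"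
proof -
  interpret bump_series \<alpha> \<mu> "hump_sign \<mu> \<alpha> x" "hump_weight \<alpha>" x "hump_degree \<alpha>"
    by (rule bump_series_hump[where x=x, OF assms])
  show ?thesis
    using Lip_alpha_bump_sum abs_fourier_partial_sum_hump_ge[where x=x, OF assms] by blast
qed

theorem theorem1:
  fixes \<alpha> :: real and X :: "cmat2 set" and \<mu> :: "cmat2 measure"
  assumes "0 < \<alpha>" "\<alpha> < 1"
    and "countable X" "X \<subseteq> SU2"
    and "is_haar_SU2 \<mu>"
  shows "\<exists>f. Lip_alpha \<alpha> f \<and>
    (\<forall>x\<in>X. \<not> bdd_above ((\<lambda>N. \<bar>fourier_partial_sum \<mu> N f x\<bar>) ` {1..}))"
proof (cases "X = {}")
  case True
  then show ?thesis unfolding Lip_alpha_def by (intro exI[of _ "\<lambda>_. 0"] conjI exI[of _ 0]) auto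
next
  case False
  obtain e :: "nat \<Rightarrow> cmat2" where e: "range e \<subseteq> X" and often: "\<forall>x\<in>X. \<forall>k. \<exists>j\<ge>k. e j = x"
    using countable_enumeration_infinitely_often[OF assms(3) False] by blast
  have "e j \<in> SU2" for j using e assms(4) by blast
  then obtain f where f: "Lip_alpha \<alpha> f"
    and grow: "\<forall>j. real j + 1 \<le> \<bar>fourier_partial_sum \<mu> (hump_degree \<alpha> j + 3) f (e j)\<bar>"
    using Lip_alpha_with_growing_partial_sums[where x=e, OF assms(1,2,5)] by blast
  have "\<not> bdd_above ((\<lambda>N. \<bar>fourier_partial_sum \<mu> N f x\<bar>) ` {1..})" if x: "x \<in> X" for x
  proof (rule not_bdd_above_atLeast_1)
    fix k
    obtain j where j: "k \<le> j" "e j = x" using often x by blast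
    have "real j + 1 \<le> \<bar>fourier_partial_sum \<mu> (hump_degree \<alpha> j + 3) f x\<bar>"
      using grow j(2) by blast
    then have "real k \<le> \<bar>fourier_partial_sum \<mu> (hump_degree \<alpha> j + 3) f x\<bar>"
      using j(1) by linarith
    then show "\<exists>N\<ge>1. real k \<le> \<bar>fourier_partial_sum \<mu> N f x\<bar>" by (intro exI[of _ "hump_degree \<alpha> j + 3"]) simp
  qed
  then show ?thesis using f by blast
qed

end
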